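(* For every $n$, $\mathcal{P}_n$ is a left ideal of $(\mathbf{Sym}_n,* )$: if $F\in\mathbf{Sym}_n$ and $G\in\mathcal{P}_n$, then $F*G\in\mathcal{P}_n$. More precisely, $\theta(F)=F*\tilde S_n$ for all $F\in\mathbf{Sym}_n$, so that $\mathcal{P}_n=\mathbf{Sym}_n*\tilde S_n$.
   Context: $\mathbf{Sym}$ denotes the algebra of noncommutative symmetric functions over $\mathbb{Q}$: the free associative algebra on generators $S_1,S_2,\dots$ with $S_0=1$ and $\deg S_n=n$, graded with homogeneous components $\mathbf{Sym}_n$. For a composition $I=(i_1,\dots,i_r)$ of $n$, set $S^I=S_{i_1}\cdots S_{i_r}$ and $\operatorname{Des}(I)=\{i_1,\dots,i_1+\cdots+i_{r-1}\}$. Ribbons are defined by $S^I=\sum_{J\models n,\ \operatorname{Des}(J)\subseteq\operatorname{Des}(I)}R_J$, and $\Lambda_n=R_{(1^n)}$. The peak set of a composition $J$ is $HP(J)=\{a\in\operatorname{Des}(J):a\ne1,\ a-1\notin\operatorname{Des}(J)\}$; $\mathcal{P}_n$ is the span of the sums $\Pi_P=\sum_{HP(J)=P}R_J$ over peak sets $P$ (subsets of $[2,n-1]$ containing no two consecutive integers). $\theta$ is the algebra endomorphism of $\mathbf{Sym}$ with $\theta(S_n)=\tilde S_n=\sum_{k=0}^n\Lambda_kS_{n-k}$. The internal product $*$ on $\mathbf{Sym}_n$ is the bilinear (associative) product given by $S^I*S^J=\sum_M S^M$, where $M$ runs over matrices of nonnegative integers with row sums $I$ and column sums $J$, and $S^M$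 is the product $S_{m_{11}}S_{m_{12}}\cdots S_{m_{1s}}S_{m_{21}}\cdots S_{m_{rs}}$ of the entries read row by row. *)

theory Defs
  imports Complex_Main "HOL-Library.Function_Algebras"
begin

text \<open>Elements of Sym are represented by their coefficient functions in the
  (free-algebra) basis S^I, I ranging over compositions (lists of positive nats).\<close>

type_synonym nsym = "nat list \<Rightarrow> rat"

definition is_comp :: "nat list \<Rightarrow> bool" where
  "is_comp I \<longleftrightarrow> (\<forall>x\<in>set I. 0 < x)"

definition comps :: "nat \<Rightarrow> nat list set" where
  "comps n = {I. is_comp I \<and> sum_list I = n}"

definition Sym :: "nat \<Rightarrow> nsym set" where
  "Sym n = {F. \<forall>I. F I \<noteq> 0 \<longrightarrow> I \<in> comps n}"

definition scal :: "rat \<Rightarrow> nsym \<Rightarrow> nsym" where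
  "scal c F = (\<lambda>K. c * F K)"

text \<open>S^I for an arbitrary list of nonnegative integers (S_0 = 1).\<close>
definition SB :: "nat list \<Rightarrow> nsym" where
  "SB I = (\<lambda>K. if K = filter (\<lambda>x. x \<noteq> 0) I then 1 else 0)"

definition S :: "nat \<Rightarrow> nsym" where
  "S n = SB [n]"

text \<open>Product of the free associative algebra (concatenation of words).\<close>
definition mul :: "nsym \<Rightarrow> nsym \<Rightarrow> nsym" where
  "mul F G = (\<lambda>K. \<Sum>k\<le>length K. F (take k K) * G (drop k K))"

definition prodl :: "nsym list \<Rightarrow> nsym" where
  "prodl xs = foldr mul xs (SB [])"

definition Des :: "nat list \<Rightarrow> nat set" where
  "Des I = {sum_list (take k I) | k. 0 < k \<and> k < length I}"

definition ribbon :: "nat list \<Rightarrow> nsym" where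
  "ribbon = (THE R. (\<forall>J. \<not> is_comp J \<longrightarrow> R J = 0) \<and>
      (\<forall>I. is_comp I \<longrightarrow>
         SB I = (\<Sum>J\<in>{J\<in>comps (sum_list I). Des J \<subseteq> Des I}. R J)))"

definition Lambda :: "nat \<Rightarrow> nsym" where
  "Lambda n = ribbon (replicate n 1)"

definition HP :: "nat list \<Rightarrow> nat set" where
  "HP J = {a\<in>Des J. a \<noteq> 1 \<and> a - 1 \<notin> Des J}"

definition peaksets :: "nat \<Rightarrow> nat set set" where
  "peaksets n = {P. P \<subseteq> {2..n - 1} \<and> (\<forall>a\<in>P. a + 1 \<notin> P)}"

definition PiP :: "nat \<Rightarrow> nat set \<Rightarrow> nsym" where
  "PiP n P = (\<Sum>J\<in>{J\<in>comps n. HP J = P}. ribbon J)"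

definition Peak :: "nat \<Rightarrow> nsym set" where
  "Peak n = {F. \<exists>c. F = (\<Sum>P\<in>peaksets n. scal (c P) (PiP n P))}"

definition Stilde :: "nat \<Rightarrow> nsym" where
  "Stilde n = (\<Sum>k\<le>n. mul (Lambda k) (S (n - k)))"

text \<open>theta: the algebra endomorphism with S_n \<mapsto> Stilde_n, applied to F
  via its expansion in the S^I basis.\<close>
definition theta :: "nsym \<Rightarrow> nsym" where
  "theta F = (\<Sum>I\<in>{I. F I \<noteq> 0}. scal (F I) (prodl (map Stilde I)))"

definition matrices :: "nat list \<Rightarrow> nat list \<Rightarrow> nat list list set" where
  "matrices I J = {M. length M = length I \<and>
     (\<forall>k<length I. length (M ! k) = length J \<and> sum_list (M ! k) = I ! k) \<and>
     (\<forall>l<length J. (\<Sum>k<length I. M ! k ! l) = J ! l)}"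

definition internal :: "nsym \<Rightarrow> nsym \<Rightarrow> nsym" where
  "internal F G = (\<Sum>I\<in>{I. F I \<noteq> 0}. \<Sum>J\<in>{J. G J \<noteq> 0}.
       scal (F I * G J) (\<Sum>M\<in>matrices I J. SB (concat M)))"

end

theory Submission
  imports Defs
begin

(*
  Ribbon coefficients of a product split along the
  descent set of a concatenation, and Stilde_m = sum_k Lambda_k S_(m-k) has ribbon coefficient 2
  on the peak-free descent sets {1..t} and 0 on all others; so the coefficient of R_J in
  theta(S^I) is 2^l(I) or 0 according as every peak of J is, or immediately follows, a descent
  of I. Hence theta(Sym_n) lies in P_n, and a triangularity argument on peak sets shows that it
  is all of P_n.

  Splitting off the first row of the matrices expresses S^(i.I) * G through the coproduct
  Delta G, where Delta is the algebra morphism with Delta S_m = sum_c S_c (x) S_(m-c). Since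
  Delta Stilde_m = sum_p Stilde_p (x) Stilde_(m-p), induction on I gives
  S^I * theta(H) = theta(S^I * H). For H = S_n this is theta(S^I) = S^I * Stilde_n, and for
  G = theta(H) in P_n it gives F * G = theta(F * H), which lies in P_n.
*)

section \<open>Finitely supported coefficient functions\<close>

lemma sum_fun_apply: "(sum f A) x = sum (\<lambda>a. f a x) A"
  by (induct A rule: infinite_finite_induct) auto

definition supp :: "('i \<Rightarrow> rat) \<Rightarrow> 'i set" where
  "supp F = {I. F I \<noteq> 0}"

definition scale :: "rat \<Rightarrow> ('k \<Rightarrow> rat) \<Rightarrow> ('k \<Rightarrow> rat)" where
  "scale c F = (\<lambda>K. c * F K)"

definition basis :: "'i \<Rightarrow> ('i \<Rightarrow> rat)" where
  "basis a = (\<lambda>x. if x = a then 1 else 0)"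

definition linext :: "('i \<Rightarrow> 'k \<Rightarrow> rat) \<Rightarrow> ('i \<Rightarrow> rat) \<Rightarrow> ('k \<Rightarrow> rat)" where
  "linext h F = (\<Sum>I\<in>supp F. scale (F I) (h I))"

lemma scal_eq_scale: "scal = scale"
  by (simp add: scal_def scale_def fun_eq_iff)

lemma scale_apply [simp]: "scale c F K = c * F K"
  by (simp add: scale_def)

lemma scale_sum: "scale c (sum f A) = (\<Sum>a\<in>A. scale c (f a))"
  by (auto simp: fun_eq_iff sum_distrib_left sum_fun_apply)

lemma sum_scale: "scale (sum f A) F = (\<Sum>a\<in>A. scale (f a) F)"
  by (auto simp: fun_eq_iff sum_distrib_right sum_fun_apply)

lemma scale_scale [simp]: "scale a (scale b F) = scale (a * b) F"
  by (auto simp: fun_eq_iff)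

lemma scale_1 [simp]: "scale 1 F = F"
  by (auto simp: fun_eq_iff)

lemma scale_0 [simp]: "scale 0 F = 0"
  by (auto simp: fun_eq_iff)

lemma scale_zero [simp]: "scale c 0 = 0"
  by (auto simp: fun_eq_iff)

lemma supp_zero [simp]: "supp 0 = {}"
  by (simp add: supp_def)

lemma supp_add: "supp (F + G) \<subseteq> supp F \<union> supp G"
  by (auto simp: supp_def)

lemma supp_scale: "supp (scale c F) \<subseteq> supp F"
  by (auto simp: supp_def)

lemma supp_sum: "supp (sum f A) \<subseteq> (\<Union>a\<in>A. supp (f a))"
  by (auto simp: supp_def sum_fun_apply intro: ccontr dest: sum.neutral)

lemma finite_supp_scale: "finite (supp F) \<Longrightarrow> finite (supp (scale c F))"
  using finite_subset[OF supp_scale] .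

lemma supp_basis [simp]: "supp (basis a) = {a}"
  by (auto simp: supp_def basis_def)

lemma linext_eq:
  assumes "finite A" "supp F \<subseteq> A"
  shows "linext h F = (\<Sum>I\<in>A. scale (F I) (h I))"
  unfolding linext_def
  by (rule sum.mono_neutral_left) (use assms in \<open>auto simp: supp_def\<close>)

lemma linext_add:
  assumes "finite (supp F)" "finite (supp G)"
  shows "linext h (F + G) = linext h F + linext h G"
proof -
  let ?A = "supp F \<union> supp G"
  have "linext h (F + G) = (\<Sum>I\<in>?A. scale ((F + G) I) (h I))"
    by (rule linext_eq) (use assms in \<open>auto simp: supp_def\<close>)
  also have "\<dots> = (\<Sum>I\<in>?A. scale (F I) (h I)) + (\<Sum>I\<in>?A. scale (G I) (h I))"
    by (simp add: sum.distrib[symmetric] fun_eq_iff algebra_simps sum_fun_apply)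
  also have "\<dots> = linext h F + linext h G"
    by (subst (1 2) linext_eq[symmetric]) (use assms in auto)
  finally show ?thesis .
qed

lemma linext_scale:
  assumes "finite (supp F)"
  shows "linext h (scale c F) = scale c (linext h F)"
proof -
  have "linext h (scale c F) = (\<Sum>I\<in>supp F. scale (scale c F I) (h I))"
    by (rule linext_eq) (use assms in \<open>auto simp: supp_def\<close>)
  also have "\<dots> = scale c (linext h F)"
    by (simp add: linext_def scale_sum)
  finally show ?thesis .
qed

lemma linext_sum:
  assumes "finite A" "\<And>a. a \<in> A \<Longrightarrow> finite (supp (f a))"
  shows "linext h (sum f A) = (\<Sum>a\<in>A. linext h (f a))"
  using assms
proof (induct A rule: finite_induct)
  case empty
  then show ?case by (simp add: linext_def supp_def)
next
  case (insert x A)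
  have "finite (supp (sum f A))"
    using supp_sum[of f A] insert by (meson finite_UN_I finite_subset insertCI)
  then have "linext h (f x + sum f A) = linext h (f x) + linext h (sum f A)"
    using insert.prems by (intro linext_add) auto
  also have "linext h (sum f A) = (\<Sum>a\<in>A. linext h (f a))"
    using insert by blast
  finally show ?case
    unfolding sum.insert[OF insert(1,2)] .
qed

lemma linext_cong: "(\<And>I. I \<in> supp F \<Longrightarrow> h I = g I) \<Longrightarrow> linext h F = linext g F"
  by (simp add: linext_def)

lemma linext_apply: "linext h F K = (\<Sum>I\<in>supp F. F I * h I K)"
  by (simp add: linext_def sum_fun_apply)

lemma linext_basis [simp]: "linext h (basis a) = h a"
  by (simp add: linext_def) (simp add: basis_def)

lemma linext_basis_eq: "finite (supp F) \<Longrightarrow> linext basis F = F"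
  by (rule ext) (auto simp: linext_apply basis_def supp_def if_distrib sum.delta' cong: if_cong)

lemma linext_linext:
  assumes "finite (supp F)" "\<And>I. I \<in> supp F \<Longrightarrow> finite (supp (h I))"
  shows "linext k (linext h F) = linext (\<lambda>I. linext k (h I)) F"
  unfolding linext_def[of h]
  using assms by (simp add: linext_sum finite_supp_scale linext_scale linext_def[of _ F])

section \<open>The concatenation product\<close>

lemma SB_eq_basis_filter: "SB I = basis (filter (\<lambda>x. x \<noteq> 0) I)"
  by (simp add: SB_def basis_def fun_eq_iff)

lemma SB_eq_basis: "is_comp I \<Longrightarrow> SB I = basis I"
  by (simp add: SB_eq_basis_filter is_comp_def filter_id_conv)

lemma mul_apply: "mul F G K = (\<Sum>k\<le>length K. F (take k K) * G (drop k K))"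
  by (simp add: mul_def)

lemma mul_scale_left: "mul (scale c F) G = scale c (mul F G)"
  by (simp add: mul_def fun_eq_iff algebra_simps sum_distrib_left)

lemma mul_scale_right: "mul F (scale c G) = scale c (mul F G)"
  by (simp add: mul_def fun_eq_iff algebra_simps sum_distrib_left)

lemma mul_sum_left: "mul (sum f A) G = (\<Sum>a\<in>A. mul (f a) G)"
  by (rule ext) (simp only: mul_apply sum_fun_apply sum_distrib_right sum.swap[of _ A])

lemma mul_sum_right: "mul G (sum f A) = (\<Sum>a\<in>A. mul G (f a))"
  by (rule ext) (simp only: mul_apply sum_fun_apply sum_distrib_left sum.swap[of _ A])

lemma take_drop_eq_iff:
  assumes "k \<le> length K"
  shows "(take k K = a \<and> drop k K = b) \<longleftrightarrow> (k = length a \<and> K = a @ b)"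
  using assms by (metis append_eq_conv_conj append_take_drop_id length_take min_absorb2)

lemma mul_basis: "mul (basis a) (basis b) = basis (a @ b)"
proof (rule ext)
  fix K
  have "mul (basis a) (basis b) K = (\<Sum>k\<le>length K. if k = length a \<and> K = a @ b then 1 else 0)"
    unfolding mul_apply
    by (rule sum.cong) (auto simp: basis_def take_drop_eq_iff[symmetric])
  also have "\<dots> = basis (a @ b) K"
    by (auto simp: basis_def sum.delta' cong: conj_cong)
  finally show "mul (basis a) (basis b) K = basis (a @ b) K" .
qed

lemma mul_SB: "mul (SB a) (SB b) = SB (a @ b)"
  by (simp add: SB_eq_basis_filter mul_basis)

lemma mul_basis_Nil_left [simp]: "mul (basis []) F = F"
  by (rule ext) (simp add: mul_apply basis_def sum.atMost_shift)

lemma mul_basis_Nil_right [simp]: "mul F (basis []) = F"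
proof (rule ext)
  fix K
  have "mul F (basis []) K = (\<Sum>k\<le>length K. if k = length K then F (take k K) else 0)"
    unfolding mul_apply by (rule sum.cong) (auto simp: basis_def)
  then show "mul F (basis []) K = F K" by simp
qed

lemma mul_assoc: "mul (mul F G) H = mul F (mul G H)"
proof (rule ext)
  fix K :: "nat list"
  let ?n = "length K"
  let ?f = "\<lambda>j l. F (take j K) * G (take l (drop j K)) * H (drop l (drop j K))"
  have "mul (mul F G) H K = (\<Sum>k\<le>?n. \<Sum>j\<le>k. F (take j (take k K)) * G (drop j (take k K)) * H (drop k K))"
    unfolding mul_apply sum_distrib_right
    by (rule sum.cong[OF refl]) (simp add: min_absorb2)
  also have "\<dots> = (\<Sum>k\<le>?n. \<Sum>j\<le>k. ?f j (k - j))"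
    by (intro sum.cong refl) (simp add: min_absorb1 drop_take)
  also have "\<dots> = (\<Sum>(j,l)\<in>{(j,l). j + l \<le> ?n}. ?f j l)"
    by (rule sum.triangle_reindex_eq[symmetric])
  also have "\<dots> = (\<Sum>j\<le>?n. \<Sum>l\<le>?n - j. ?f j l)"
  proof -
    have "{(j,l). j + l \<le> ?n} = Sigma {..?n} (\<lambda>j. {..?n - j})" by auto
    then show ?thesis by (simp only:) (rule sum.Sigma[symmetric]; simp)
  qed
  also have "\<dots> = mul F (mul G H) K"
    unfolding mul_apply sum_distrib_left by (intro sum.cong refl) (simp_all add: mult.assoc)
  finally show "mul (mul F G) H K = mul F (mul G H) K" .
qed

lemma supp_mul: "supp (mul F G) \<subseteq> {I @ J | I J. I \<in> supp F \<and> J \<in> supp G}"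
proof
  fix K assume "K \<in> supp (mul F G)"
  then have "(\<Sum>k\<le>length K. F (take k K) * G (drop k K)) \<noteq> 0"
    by (simp add: supp_def mul_apply)
  then obtain k where "F (take k K) * G (drop k K) \<noteq> 0"
    by (meson sum.not_neutral_contains_not_neutral)
  then have "take k K \<in> supp F" "drop k K \<in> supp G" by (auto simp: supp_def)
  then show "K \<in> {I @ J | I J. I \<in> supp F \<and> J \<in> supp G}"
    by (metis (mono_tags, lifting) append_take_drop_id mem_Collect_eq)
qed

lemma finite_supp_mul:
  assumes "finite (supp F)" "finite (supp G)"
  shows "finite (supp (mul F G))"
proof -
  have "supp (mul F G) \<subseteq> (\<lambda>(I,J). I @ J) ` (supp F \<times> supp G)"
    using supp_mul[of F G] by force
  moreover have "finite ((\<lambda>(I,J). I @ J) ` (supp F \<times> supp G))"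
    using assms by simp
  ultimately show ?thesis by (rule finite_subset)
qed

lemma mul_expand:
  assumes "finite (supp F)" "finite (supp G)"
  shows "mul F G = (\<Sum>I\<in>supp F. \<Sum>J\<in>supp G. scale (F I * G J) (basis (I @ J)))"
proof -
  have "mul F G = mul (linext basis F) (linext basis G)"
    using assms linext_basis_eq by metis
  also have "\<dots> = (\<Sum>I\<in>supp F. \<Sum>J\<in>supp G. scale (F I * G J) (basis (I @ J)))"
    unfolding linext_def mul_sum_left
    by (rule sum.cong[OF refl]) (simp add: mul_sum_right mul_scale_left mul_scale_right mul_basis mult.commute)
  finally show ?thesis .
qed

lemma linext_mul:
  assumes "finite (supp F)" "finite (supp G)"
    and hom: "\<And>I J. I \<in> supp F \<Longrightarrow> J \<in> supp G \<Longrightarrow> h (I @ J) = P (h I) (h J)"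
    and sum_left: "\<And>f (A :: nat list set) Y. P (sum f A) Y = (\<Sum>a\<in>A. P (f a) Y)"
    and sum_right: "\<And>g (B :: nat list set) X. P X (sum g B) = (\<Sum>b\<in>B. P X (g b))"
    and scale_left: "\<And>c X Y. P (scale c X) Y = scale c (P X Y)"
    and scale_right: "\<And>c X Y. P X (scale c Y) = scale c (P X Y)"
  shows "linext h (mul F G) = P (linext h F) (linext h G)"
proof -
  have fin: "finite (supp (scale c (basis K)))" for c and K :: "nat list"
    by (simp add: finite_supp_scale)
  have fin2: "finite (supp (\<Sum>J\<in>supp G. scale (F I * G J) (basis (I @ J))))" for I
    by (rule finite_subset[OF supp_sum]) (use assms(2) fin in auto)
  have "linext h (mul F G) = (\<Sum>I\<in>supp F. \<Sum>J\<in>supp G. linext h (scale (F I * G J) (basis (I @ J))))"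
    unfolding mul_expand[OF assms(1,2)] using assms(1,2) fin fin2
    by (simp add: linext_sum)
  also have "\<dots> = (\<Sum>I\<in>supp F. \<Sum>J\<in>supp G. P (scale (F I) (h I)) (scale (G J) (h J)))"
    by (intro sum.cong refl) (simp add: linext_scale hom scale_left scale_right mult.commute)
  also have "\<dots> = P (linext h F) (linext h G)"
    unfolding linext_def by (simp only: sum_left sum_right) (rule sum.swap)
  finally show ?thesis .
qed

section \<open>Compositions and the homogeneous components\<close>

lemma is_comp_Nil [simp]: "is_comp []"
  by (simp add: is_comp_def)

lemma is_comp_Cons [simp]: "is_comp (i # I) \<longleftrightarrow> 0 < i \<and> is_comp I"
  by (simp add: is_comp_def)

lemma is_comp_append [simp]: "is_comp (I @ J) \<longleftrightarrow> is_comp I \<and> is_comp J"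
  by (auto simp: is_comp_def)

lemma comps_Cons: "i # I \<in> comps n \<longleftrightarrow> 0 < i \<and> i \<le> n \<and> I \<in> comps (n - i)"
  by (auto simp: comps_def)

lemma length_le_sum_list: "is_comp I \<Longrightarrow> length I \<le> sum_list I"
  by (induct I) auto

lemma finite_comps: "finite (comps n)"
proof -
  have "comps n \<subseteq> {xs. set xs \<subseteq> {..n} \<and> length xs \<le> n}"
    using length_le_sum_list member_le_sum_list by (fastforce simp: comps_def)
  then show ?thesis by (rule finite_subset) (rule finite_lists_length_le, simp)
qed

lemma comps_0: "comps 0 = {[]}"
  by (auto simp: comps_def is_comp_def) (metis list.set_intros(1) neq_Nil_conv sum_list_eq_0_iff not_less0)

lemma Sym_iff: "F \<in> Sym n \<longleftrightarrow> supp F \<subseteq> comps n"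
  by (auto simp: Sym_def supp_def)

lemma Sym_finite_supp: "F \<in> Sym n \<Longrightarrow> finite (supp F)"
  using finite_comps by (auto simp: Sym_iff intro: finite_subset)

lemma Sym_add: "F \<in> Sym n \<Longrightarrow> G \<in> Sym n \<Longrightarrow> F + G \<in> Sym n"
  using supp_add[of F G] by (auto simp: Sym_iff)

lemma Sym_scale: "F \<in> Sym n \<Longrightarrow> scale c F \<in> Sym n"
  using supp_scale[of c F] by (auto simp: Sym_iff)

lemma Sym_zero [simp]: "0 \<in> Sym n"
  by (simp add: Sym_iff supp_def)

lemma Sym_sum: "(\<And>a. a \<in> A \<Longrightarrow> f a \<in> Sym n) \<Longrightarrow> sum f A \<in> Sym n"
  by (induct A rule: infinite_finite_induct) (auto simp: Sym_add)

lemma Sym_basis: "I \<in> comps n \<Longrightarrow> basis I \<in> Sym n"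
  by (simp add: Sym_iff)

lemma sum_list_filter_nonzero: "sum_list (filter (\<lambda>x. x \<noteq> 0) I) = sum_list (I :: nat list)"
  by (induct I) auto

lemma Sym_SB: "SB I \<in> Sym (sum_list I)"
  using sum_list_filter_nonzero[of I] by (simp add: Sym_iff SB_eq_basis_filter comps_def is_comp_def)

lemma Sym_mul: "F \<in> Sym a \<Longrightarrow> G \<in> Sym b \<Longrightarrow> mul F G \<in> Sym (a + b)"
  using supp_mul[of F G] by (fastforce simp: Sym_iff comps_def)

lemma Sym_linext: "finite (supp F) \<Longrightarrow> (\<And>I. I \<in> supp F \<Longrightarrow> h I \<in> Sym n) \<Longrightarrow> linext h F \<in> Sym n"
  unfolding linext_def by (rule Sym_sum) (simp add: Sym_scale)

lemma linext_Sym: "F \<in> Sym n \<Longrightarrow> linext h F = (\<Sum>I\<in>comps n. scale (F I) (h I))"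
  by (rule linext_eq) (use finite_comps in \<open>auto simp: Sym_iff\<close>)

lemma Sym_expand: "F \<in> Sym n \<Longrightarrow> F = (\<Sum>I\<in>comps n. scale (F I) (basis I))"
  by (metis Sym_finite_supp linext_Sym linext_basis_eq)

lemma mul_expand_Sym:
  assumes "F \<in> Sym a" "G \<in> Sym b"
  shows "mul F G = (\<Sum>I\<in>comps a. \<Sum>J\<in>comps b. scale (F I * G J) (basis (I @ J)))"
proof -
  have "mul F G = mul (\<Sum>I\<in>comps a. scale (F I) (basis I)) (\<Sum>J\<in>comps b. scale (G J) (basis J))"
    using Sym_expand assms by metis
  then show ?thesis
    unfolding mul_sum_left
    by (simp add: mul_sum_right mul_scale_left mul_scale_right mul_basis mult.commute)
qed

section \<open>Descent sets\<close>

lemma Des_Nil [simp]: "Des [] = {}" by (simp add: Des_def)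

lemma Des_Cons: "Des (i # I) = (if I = [] then {} else insert i ((+) i ` Des I))"
proof (cases "I = []")
  case True then show ?thesis by (simp add: Des_def)
next
  case False
  have "Des (i # I) \<subseteq> insert i ((+) i ` Des I)"
  proof
    fix x assume "x \<in> Des (i # I)"
    then obtain k where k: "x = sum_list (take k (i # I))" "0 < k" "k < Suc (length I)"
      by (auto simp: Des_def)
    then obtain k' where "k = Suc k'" by (cases k) auto
    then show "x \<in> insert i ((+) i ` Des I)"
      using k by (cases "k' = 0") (auto simp: Des_def)
  qed
  moreover have "insert i ((+) i ` Des I) \<subseteq> Des (i # I)"
  proof
    fix x assume "x \<in> insert i ((+) i ` Des I)"
    then consider "x = i" | k where "x = i + sum_list (take k I)" "0 < k" "k < length I"
      by (auto simp: Des_def)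
    then show "x \<in> Des (i # I)"
    proof cases
      case 1
      then show ?thesis using False unfolding Des_def
        by (intro CollectI exI[of _ 1]) (auto simp: neq_Nil_conv)
    next
      case 2
      then show ?thesis unfolding Des_def
        by (intro CollectI exI[of _ "Suc k"]) auto
    qed
  qed
  ultimately show ?thesis using False by auto
qed

lemma Des_single [simp]: "Des [i] = {}"
  by (simp add: Des_Cons)

lemma Des_subset: "I \<in> comps n \<Longrightarrow> Des I \<subseteq> {1..<n}"
proof (induct I arbitrary: n)
  case Nil then show ?case by simp
next
  case (Cons i I)
  then have I: "I \<in> comps (n - i)" "0 < i" "sum_list I = n - i" "i \<le> n"
    by (auto simp: comps_def)
  show ?case
  proof (cases "I = []")
    case True then show ?thesis by (simp add: Des_Cons)
  next
    case False
    then have "0 < sum_list I" using I by (cases I) (auto simp: comps_def)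
    have "Des I \<subseteq> {1..<n - i}" using Cons.hyps[OF I(1)] .
    then show ?thesis using I False \<open>0 < sum_list I\<close> by (fastforce simp: Des_Cons)
  qed
qed

lemma Des_inj: "I \<in> comps n \<Longrightarrow> J \<in> comps n \<Longrightarrow> Des I = Des J \<Longrightarrow> I = J"
proof (induct I arbitrary: J n)
  case Nil
  then have "n = 0" by (simp add: comps_def)
  then show ?case using Nil comps_0 by auto
next
  case (Cons i I)
  from Cons.prems(1) have i: "0 < i" "i \<le> n" "I \<in> comps (n - i)" by (auto simp: comps_Cons)
  then have "J \<noteq> []" using Cons.prems(2) by (auto simp: comps_def)
  then obtain j J' where J: "J = j # J'" by (cases J) auto
  from Cons.prems(2) J have j: "0 < j" "j \<le> n" "J' \<in> comps (n - j)" by (auto simp: comps_Cons)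
  show ?case
  proof (cases "I = []")
    case True
    then have "Des J = {}" using Cons.prems by (simp add: Des_Cons)
    then have "J' = []" using J by (auto simp: Des_Cons split: if_splits)
    then show ?thesis using True J Cons.prems by (auto simp: comps_def)
  next
    case False
    then have "J' \<noteq> []" using Cons.prems J by (auto simp: Des_Cons split: if_splits)
    have DI: "Des (i # I) = insert i ((+) i ` Des I)" using False by (simp add: Des_Cons)
    have DJ: "Des J = insert j ((+) j ` Des J')" using \<open>J' \<noteq> []\<close> J by (simp add: Des_Cons)
    have pI: "\<forall>x\<in>Des I. 0 < x" using Des_subset[OF i(3)] by auto
    have pJ: "\<forall>x\<in>Des J'. 0 < x" using Des_subset[OF j(3)] by auto
    have "i \<in> Des J" using Cons.prems DI by auto
    then have "i \<ge> j" using DJ pJ by auto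
    moreover have "j \<in> Des (i # I)" using Cons.prems DJ by auto
    then have "j \<ge> i" using DI pI by auto
    ultimately have ij: "i = j" by simp
    have "(+) i ` Des I = (+) i ` Des J'"
    proof -
      have "i \<notin> (+) i ` Des I" "i \<notin> (+) i ` Des J'" using pI pJ by auto
      then show ?thesis using Cons.prems(3) DI DJ ij
        by (metis insert_ident)
    qed
    then have "Des I = Des J'" by (simp add: inj_image_eq_iff)
    then have "I = J'" using Cons.hyps[OF i(3)] j(3) ij by simp
    then show ?thesis using J ij by simp
  qed
qed

lemma Des_surj: "D \<subseteq> {1..<n} \<Longrightarrow> \<exists>I\<in>comps n. Des I = D"
proof (induct n arbitrary: D rule: less_induct)
  case (less n)
  show ?case
  proof (cases "D = {}")
    case True
    show ?thesis
    proof (cases "n = 0")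
      case True then show ?thesis using \<open>D = {}\<close> by (intro bexI[of _ "[]"]) (auto simp: comps_def)
    next
      case False then show ?thesis using \<open>D = {}\<close>
        by (intro bexI[of _ "[n]"]) (auto simp: comps_def is_comp_def)
    qed
  next
    case False
    have fin: "finite D" using less.prems finite_subset by blast
    define i where "i = Min D"
    have iD: "i \<in> D" using False fin by (simp add: i_def)
    have imin: "\<forall>x\<in>D. i \<le> x" using fin by (simp add: i_def)
    have i: "0 < i" "i < n" using iD less.prems by auto
    define D' where "D' = (\<lambda>x. x - i) ` (D - {i})"
    have "D' \<subseteq> {1..<n - i}" using less.prems imin unfolding D'_def by fastforce
    then obtain I' where I': "I' \<in> comps (n - i)" "Des I' = D'" using less.hyps[of "n - i"] i by auto
    have "I' \<noteq> []" using I' i by (auto simp: comps_def)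
    have "Des (i # I') = insert i ((+) i ` D')" using \<open>I' \<noteq> []\<close> I' by (simp add: Des_Cons)
    also have "\<dots> = D"
    proof -
      have "(+) i ` D' = D - {i}"
        unfolding D'_def image_image using imin
        by (auto simp: image_iff intro!: bexI)
      then show ?thesis using iD by auto
    qed
    finally show ?thesis using I' i by (intro bexI[of _ "i # I'"]) (auto simp: comps_Cons)
  qed
qed

lemma sum_comps_Des_interval:
  fixes g :: "nat set \<Rightarrow> 'a::comm_monoid_add"
  assumes "B \<subseteq> {1..<n}"
  shows "(\<Sum>I\<in>{I\<in>comps n. A \<subseteq> Des I \<and> Des I \<subseteq> B}. g (Des I)) = (\<Sum>E | A \<subseteq> E \<and> E \<subseteq> B. g E)"
proof (rule sum.reindex_cong[symmetric])
  show "inj_on Des {I\<in>comps n. A \<subseteq> Des I \<and> Des I \<subseteq> B}"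
    by (rule inj_onI) (auto intro: Des_inj)
  show "{E. A \<subseteq> E \<and> E \<subseteq> B} = Des ` {I\<in>comps n. A \<subseteq> Des I \<and> Des I \<subseteq> B}"
  proof
    show "{E. A \<subseteq> E \<and> E \<subseteq> B} \<subseteq> Des ` {I\<in>comps n. A \<subseteq> Des I \<and> Des I \<subseteq> B}"
    proof
      fix E assume E: "E \<in> {E. A \<subseteq> E \<and> E \<subseteq> B}"
      then obtain I where "I \<in> comps n" "Des I = E"
        using Des_surj assms by (metis (mono_tags, lifting) mem_Collect_eq order_trans)
      with E show "E \<in> Des ` {I\<in>comps n. A \<subseteq> Des I \<and> Des I \<subseteq> B}" by auto
    qed
  qed auto
qed simp

lemma Des_append:
  "I \<noteq> [] \<Longrightarrow> J \<noteq> [] \<Longrightarrow> Des (I @ J) = Des I \<union> {sum_list I} \<union> (+) (sum_list I) ` Des J"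
proof (induct I)
  case Nil then show ?case by simp
next
  case (Cons i I)
  show ?case
  proof (cases "I = []")
    case True then show ?thesis using Cons by (simp add: Des_Cons)
  next
    case False
    then show ?thesis
      using Cons by (auto simp: Des_Cons image_Un image_image add.assoc)
  qed
qed

definition lower :: "nat set \<Rightarrow> nat \<Rightarrow> nat set" where
  "lower D a = {x\<in>D. x < a}"

definition upper :: "nat set \<Rightarrow> nat \<Rightarrow> nat set" where
  "upper D a = (\<lambda>x. x - a) ` {x\<in>D. a < x}"

lemma mem_upper_iff: "y \<in> upper D a \<longleftrightarrow> 0 < y \<and> a + y \<in> D"
proof
  assume "y \<in> upper D a"
  then obtain x where "x \<in> D" "a < x" "y = x - a" by (auto simp: upper_def)
  then show "0 < y \<and> a + y \<in> D" by simp
next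
  assume "0 < y \<and> a + y \<in> D"
  then show "y \<in> upper D a"
    unfolding upper_def by (intro image_eqI[of _ _ "a + y"]) auto
qed

lemma subset_Des_append_iff:
  assumes I: "I \<in> comps a" and J: "J \<in> comps b" and D: "D \<subseteq> {1..<a+b}"
  shows "D \<subseteq> Des (I @ J) \<longleftrightarrow> lower D a \<subseteq> Des I \<and> upper D a \<subseteq> Des J"
proof (cases "I = [] \<or> J = []")
  case True
  then have "I = [] \<and> a = 0 \<or> J = [] \<and> b = 0"
    using I J by (auto simp: comps_def)
  then show ?thesis
    using D by (force simp: lower_def upper_def image_iff)
next
  case False
  have DI: "Des I \<subseteq> {1..<a}" and DJ: "Des J \<subseteq> {1..<b}"
    using Des_subset[OF I] Des_subset[OF J] .
  have "Des (I @ J) = Des I \<union> {a} \<union> (+) a ` Des J"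
    using Des_append False I by (simp add: comps_def)
  then have des: "x \<in> Des (I @ J) \<longleftrightarrow> (x < a \<and> x \<in> Des I) \<or> x = a \<or> (a < x \<and> x - a \<in> Des J)" for x
    using DI DJ by (auto simp: image_iff) (metis add_diff_inverse_nat less_not_refl2 not_less_iff_gr_or_eq)
  show ?thesis
  proof
    assume "D \<subseteq> Des (I @ J)"
    then show "lower D a \<subseteq> Des I \<and> upper D a \<subseteq> Des J"
      using des by (auto simp: lower_def upper_def)
  next
    assume h: "lower D a \<subseteq> Des I \<and> upper D a \<subseteq> Des J"
    show "D \<subseteq> Des (I @ J)"
    proof
      fix x assume "x \<in> D"
      then have "x < a \<Longrightarrow> x \<in> Des I" and "a < x \<Longrightarrow> x - a \<in> Des J"
        using h by (auto simp: lower_def upper_def)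
      then show "x \<in> Des (I @ J)"
        using des[of x] by (cases x a rule: linorder_cases) auto
    qed
  qed
qed

lemma Des_replicate_1: "Des (replicate k 1) = {1..<k}"
proof (induct k)
  case (Suc k)
  then show ?case
    by (cases k) (auto simp: Des_Cons image_iff)
qed simp

lemma replicate_1_in_comps: "replicate k 1 \<in> comps k"
  by (simp add: comps_def is_comp_def sum_list_replicate)


section \<open>Ribbons\<close>

definition moebius :: "nat set \<Rightarrow> nat set \<Rightarrow> rat" where
  "moebius E D = (-1) ^ (card D - card E)"

lemma sum_moebius_top:
  assumes "finite B"
  shows "(\<Sum>T | A \<subseteq> T \<and> T \<subseteq> B. moebius T B) = (if A = B then 1 else 0)"
proof (cases "A \<subset> B")
  case False
  then have "{T. A \<subseteq> T \<and> T \<subseteq> B} = (if A = B then {B} else {})" by auto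
  then show ?thesis by (simp add: moebius_def)
next
  case True
  let ?T = "{T. A \<subseteq> T \<and> T \<subseteq> B}"
  have "(\<Sum>T\<in>?T. moebius T B) = (\<Sum>T\<in>?T. (-1) ^ card B * (-1::rat) ^ card T)"
  proof (rule sum.cong[OF refl])
    fix T assume "T \<in> ?T"
    then have "card T \<le> card B" using assms card_mono by blast
    then show "moebius T B = (-1) ^ card B * (-1) ^ card T"
      unfolding moebius_def
      by (metis le_add_diff_inverse2 neg_one_power_add_eq_neg_one_power_diff power_add)
  qed
  also have "\<dots> = (-1) ^ card B * (\<Sum>T\<in>?T. (-1::rat) ^ card T)"
    by (simp add: sum_distrib_left)
  also have "(\<Sum>T\<in>?T. (-1::rat) ^ card T) = 0"
  proof (rule sum_alternating_cancels)
    show "finite ?T" using assms by simp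
    have "{T \<in> ?T. even (card T)} = {T. T \<subseteq> B \<and> A \<subseteq> T \<and> even (card T)}"
      and "{T \<in> ?T. odd (card T)} = {T. T \<subseteq> B \<and> A \<subseteq> T \<and> odd (card T)}"
      by auto
    then show "card {T \<in> ?T. even (card T)} = card {T \<in> ?T. odd (card T)}"
      using card_subsupersets_even_odd[OF assms True] by simp
  qed
  finally show ?thesis using True by simp
qed

lemma sum_moebius_bottom:
  assumes "finite B"
  shows "(\<Sum>T | A \<subseteq> T \<and> T \<subseteq> B. moebius A T) = (if A = B then 1 else 0)"
proof (cases "A \<subseteq> B")
  case False
  then have empty: "{T. A \<subseteq> T \<and> T \<subseteq> B} = {}" by auto
  have "A \<noteq> B" using False by auto
  then show ?thesis unfolding empty by simp
next
  case True
  have "moebius A T = moebius A B * moebius T B" if "A \<subseteq> T" "T \<subseteq> B" for T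
  proof -
    have "card A \<le> card T" "card T \<le> card B"
      using that assms by (auto intro: card_mono finite_subset)
    then have "card B - card A = (card T - card A) + (card B - card T)" by simp
    then show ?thesis
      by (simp add: moebius_def power_add mult.assoc flip: power_mult_distrib)
  qed
  then have "(\<Sum>T | A \<subseteq> T \<and> T \<subseteq> B. moebius A T) = moebius A B * (\<Sum>T | A \<subseteq> T \<and> T \<subseteq> B. moebius T B)"
    by (simp add: sum_distrib_left)
  then show ?thesis
    using sum_moebius_top[OF assms] by (simp add: moebius_def)
qed

lemma sum_comps_moebius_top:
  assumes "J \<in> comps n"
  shows "(\<Sum>I\<in>{I\<in>comps n. D \<subseteq> Des I \<and> Des I \<subseteq> Des J}. moebius (Des I) (Des J)) = (if D = Des J then 1 else 0)"
proof -
  have "(\<Sum>I\<in>{I\<in>comps n. D \<subseteq> Des I \<and> Des I \<subseteq> Des J}. moebius (Des I) (Des J))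
      = (\<Sum>E | D \<subseteq> E \<and> E \<subseteq> Des J. moebius E (Des J))"
    by (rule sum_comps_Des_interval[OF Des_subset[OF assms]])
  also have "\<dots> = (if D = Des J then 1 else 0)"
    by (rule sum_moebius_top[OF finite_subset[OF Des_subset[OF assms]]]) simp
  finally show ?thesis .
qed

lemma sum_comps_moebius_bottom:
  assumes "I \<in> comps n"
  shows "(\<Sum>J\<in>{J\<in>comps n. D \<subseteq> Des J \<and> Des J \<subseteq> Des I}. moebius D (Des J)) = (if D = Des I then 1 else 0)"
proof -
  have "(\<Sum>J\<in>{J\<in>comps n. D \<subseteq> Des J \<and> Des J \<subseteq> Des I}. moebius D (Des J))
      = (\<Sum>E | D \<subseteq> E \<and> E \<subseteq> Des I. moebius D E)"
    by (rule sum_comps_Des_interval[OF Des_subset[OF assms]])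
  also have "\<dots> = (if D = Des I then 1 else 0)"
    by (rule sum_moebius_bottom[OF finite_subset[OF Des_subset[OF assms]]]) simp
  finally show ?thesis .
qed

text \<open>Moebius inversion of \<open>S\<^sup>I = (\<Sum>Des J \<subseteq> Des I. R\<^sub>J)\<close> over the Boolean lattice of descent sets.\<close>

definition ribbon_expl :: "nat list \<Rightarrow> nsym" where
  "ribbon_expl J = (if is_comp J then
     (\<Sum>I\<in>{I\<in>comps (sum_list J). Des I \<subseteq> Des J}. scale (moebius (Des I) (Des J)) (basis I)) else 0)"

lemma ribbon_expl_apply:
  assumes "I \<in> comps n" "J \<in> comps n"
  shows "ribbon_expl J I = (if Des I \<subseteq> Des J then moebius (Des I) (Des J) else 0)"
proof -
  have "ribbon_expl J I = (\<Sum>K\<in>{K\<in>comps n. Des K \<subseteq> Des J}. moebius (Des K) (Des J) * basis K I)"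
    using assms by (simp add: ribbon_expl_def comps_def sum_fun_apply)
  also have "\<dots> = (\<Sum>K\<in>{K\<in>comps n. Des K \<subseteq> Des J}. if K = I then moebius (Des K) (Des J) else 0)"
    by (rule sum.cong) (auto simp: basis_def)
  finally show ?thesis
    using assms(1) finite_comps by (simp add: sum.delta')
qed

lemma ribbon_expl_notin:
  assumes "K \<notin> comps n" "J \<in> comps n"
  shows "ribbon_expl J K = 0"
  using assms by (auto simp: ribbon_expl_def comps_def sum_fun_apply basis_def intro!: sum.neutral)

lemma sum_ribbon_expl:
  assumes "I \<in> comps n"
  shows "(\<Sum>J\<in>{J\<in>comps n. Des J \<subseteq> Des I}. ribbon_expl J) = basis I"
proof (rule ext)
  fix K
  show "(\<Sum>J\<in>{J\<in>comps n. Des J \<subseteq> Des I}. ribbon_expl J) K = basis I K"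
  proof (cases "K \<in> comps n")
    case False
    then show ?thesis
      using assms by (auto simp: sum_fun_apply ribbon_expl_notin basis_def intro!: sum.neutral)
  next
    case True
    have "(\<Sum>J\<in>{J\<in>comps n. Des J \<subseteq> Des I}. ribbon_expl J) K
        = (\<Sum>J\<in>{J\<in>comps n. Des K \<subseteq> Des J \<and> Des J \<subseteq> Des I}. moebius (Des K) (Des J))"
      using True finite_comps[of n]
      by (simp add: sum_fun_apply ribbon_expl_apply sum.inter_filter[symmetric]; intro sum.cong; auto)
    also have "\<dots> = (if Des K = Des I then 1 else 0)"
      by (rule sum_comps_moebius_bottom[OF assms])
    also have "\<dots> = basis I K"
      using Des_inj[OF True assms] by (auto simp: basis_def)
    finally show ?thesis .
  qed
qed

lemma ribbon_expl_unique:
  assumes J: "J \<in> comps n"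
    and R: "\<And>I. I \<in> comps n \<Longrightarrow> basis I = (\<Sum>K\<in>{K\<in>comps n. Des K \<subseteq> Des I}. R K)"
  shows "R J = ribbon_expl J"
proof -
  let ?A = "{I\<in>comps n. Des I \<subseteq> Des J}"
  let ?m = "\<lambda>I. moebius (Des I) (Des J)"
  have "ribbon_expl J = (\<Sum>I\<in>?A. scale (?m I) (\<Sum>K\<in>{K\<in>comps n. Des K \<subseteq> Des I}. R K))"
    using J R by (auto simp: ribbon_expl_def comps_def intro!: sum.cong)
  also have "\<dots> = (\<Sum>I\<in>?A. \<Sum>K\<in>comps n. if Des K \<subseteq> Des I then scale (?m I) (R K) else 0)"
    by (intro sum.cong refl) (simp only: scale_sum, simp add: sum.inter_filter finite_comps)
  also have "\<dots> = (\<Sum>K\<in>comps n. \<Sum>I\<in>?A. if Des K \<subseteq> Des I then scale (?m I) (R K) else 0)"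
    by (rule sum.swap)
  also have "\<dots> = (\<Sum>K\<in>comps n. scale (\<Sum>I\<in>{I\<in>comps n. Des K \<subseteq> Des I \<and> Des I \<subseteq> Des J}. ?m I) (R K))"
    by (intro sum.cong refl) (simp add: sum_scale sum.inter_filter[symmetric] finite_comps; intro sum.cong; auto)
  also have "\<dots> = (\<Sum>K\<in>comps n. if K = J then R K else 0)"
    using Des_inj[OF _ J] by (intro sum.cong refl) (auto simp: sum_comps_moebius_top[OF J])
  also have "\<dots> = R J"
    using J finite_comps by (simp add: sum.delta')
  finally show ?thesis by simp
qed

lemma ribbon_eq_ribbon_expl: "ribbon = ribbon_expl"
  unfolding ribbon_def
proof (rule the_equality)
  show "(\<forall>J. \<not> is_comp J \<longrightarrow> ribbon_expl J = 0) \<and>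
    (\<forall>I. is_comp I \<longrightarrow> SB I = (\<Sum>J\<in>{J \<in> comps (sum_list I). Des J \<subseteq> Des I}. ribbon_expl J))"
    using sum_ribbon_expl by (auto simp: ribbon_expl_def SB_eq_basis comps_def)
next
  fix R
  assume R: "(\<forall>J. \<not> is_comp J \<longrightarrow> R J = 0) \<and>
    (\<forall>I. is_comp I \<longrightarrow> SB I = (\<Sum>J\<in>{J \<in> comps (sum_list I). Des J \<subseteq> Des I}. R J))"
  show "R = ribbon_expl"
  proof
    fix J
    show "R J = ribbon_expl J"
    proof (cases "is_comp J")
      case True
      then show ?thesis
        using R by (intro ribbon_expl_unique[of J "sum_list J"]) (auto simp: comps_def SB_eq_basis)
    qed (use R in \<open>simp add: ribbon_expl_def\<close>)
  qed
qed

lemma basis_eq_sum_ribbon: "I \<in> comps n \<Longrightarrow> basis I = (\<Sum>J\<in>{J\<in>comps n. Des J \<subseteq> Des I}. ribbon J)"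
  by (simp add: ribbon_eq_ribbon_expl sum_ribbon_expl)

lemma Sym_ribbon: "J \<in> comps n \<Longrightarrow> ribbon J \<in> Sym n"
  using ribbon_expl_notin by (auto simp: ribbon_eq_ribbon_expl Sym_iff supp_def)

lemma ribbon_Nil: "ribbon [] = basis []"
proof -
  have "{I. I = [] \<and> Des I = {}} = {[]}" by auto
  then show ?thesis
    by (simp add: ribbon_eq_ribbon_expl ribbon_expl_def comps_0 moebius_def)
qed

text \<open>The coefficient of \<open>R\<^sub>J\<close> with \<open>Des J = D\<close> in the ribbon expansion of \<open>F \<in> Sym\<^sub>n\<close>.\<close>

definition ribbon_coeff :: "nat \<Rightarrow> nat set \<Rightarrow> nsym \<Rightarrow> rat" where
  "ribbon_coeff n D F = (\<Sum>I\<in>{I\<in>comps n. D \<subseteq> Des I}. F I)"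

lemma ribbon_coeff_scale: "ribbon_coeff n D (scale c F) = c * ribbon_coeff n D F"
  by (simp add: ribbon_coeff_def sum_distrib_left)

lemma ribbon_coeff_sum: "ribbon_coeff n D (sum f A) = (\<Sum>a\<in>A. ribbon_coeff n D (f a))"
  by (simp add: ribbon_coeff_def sum_fun_apply) (rule sum.swap)

lemma ribbon_coeff_basis: "ribbon_coeff n D (basis K) = (if K \<in> comps n \<and> D \<subseteq> Des K then 1 else 0)"
  using finite_comps[of n] by (simp add: ribbon_coeff_def basis_def sum.delta')

lemma ribbon_coeff_ribbon:
  assumes "J \<in> comps n"
  shows "ribbon_coeff n D (ribbon J) = (if D = Des J then 1 else 0)"
proof -
  have "ribbon_coeff n D (ribbon J)
      = (\<Sum>I\<in>{I\<in>comps n. D \<subseteq> Des I}. if Des I \<subseteq> Des J then moebius (Des I) (Des J) else 0)"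
    unfolding ribbon_coeff_def ribbon_eq_ribbon_expl
    by (rule sum.cong[OF refl]) (simp add: ribbon_expl_apply[OF _ assms])
  also have "\<dots> = (\<Sum>I\<in>{I\<in>comps n. D \<subseteq> Des I \<and> Des I \<subseteq> Des J}. moebius (Des I) (Des J))"
    by (simp add: sum.inter_filter[symmetric] finite_comps; intro sum.cong; auto)
  also have "\<dots> = (if D = Des J then 1 else 0)"
    by (rule sum_comps_moebius_top[OF assms])
  finally show ?thesis .
qed

lemma ribbon_expand:
  assumes "F \<in> Sym n"
  shows "F = (\<Sum>J\<in>comps n. scale (ribbon_coeff n (Des J) F) (ribbon J))"
proof -
  have "F = (\<Sum>I\<in>comps n. scale (F I) (basis I))" using Sym_expand[OF assms] .
  also have "\<dots> = (\<Sum>I\<in>comps n. \<Sum>J\<in>comps n. if Des J \<subseteq> Des I then scale (F I) (ribbon J) else 0)"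
    by (rule sum.cong[OF refl])
       (simp add: basis_eq_sum_ribbon scale_sum sum.inter_filter[symmetric] finite_comps)
  also have "\<dots> = (\<Sum>J\<in>comps n. \<Sum>I\<in>comps n. if Des J \<subseteq> Des I then scale (F I) (ribbon J) else 0)"
    by (rule sum.swap)
  also have "\<dots> = (\<Sum>J\<in>comps n. scale (ribbon_coeff n (Des J) F) (ribbon J))"
    by (rule sum.cong[OF refl])
       (simp add: ribbon_coeff_def sum_scale sum.inter_filter[symmetric] finite_comps)
  finally show ?thesis .
qed

lemma Sym_eqI_ribbon_coeff:
  assumes "F \<in> Sym n" "G \<in> Sym n" "\<And>J. J \<in> comps n \<Longrightarrow> ribbon_coeff n (Des J) F = ribbon_coeff n (Des J) G"
  shows "F = G"
  using ribbon_expand[OF assms(1)] ribbon_expand[OF assms(2)] assms(3)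
  by (metis (no_types, lifting) sum.cong)

lemma ribbon_coeff_mul:
  assumes F: "F \<in> Sym a" and G: "G \<in> Sym b" and D: "D \<subseteq> {1..<a+b}"
  shows "ribbon_coeff (a + b) D (mul F G) = ribbon_coeff a (lower D a) F * ribbon_coeff b (upper D a) G"
proof -
  have "ribbon_coeff (a + b) D (mul F G) = (\<Sum>I\<in>comps a. \<Sum>J\<in>comps b. F I * G J * ribbon_coeff (a + b) D (basis (I @ J)))"
    unfolding mul_expand_Sym[OF F G] by (simp add: ribbon_coeff_sum ribbon_coeff_scale)
  also have "\<dots> = (\<Sum>I\<in>comps a. \<Sum>J\<in>comps b.
      (if lower D a \<subseteq> Des I then F I else 0) * (if upper D a \<subseteq> Des J then G J else 0))"
  proof (intro sum.cong refl)
    fix I J assume "I \<in> comps a" "J \<in> comps b"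
    moreover then have "I @ J \<in> comps (a + b)" by (auto simp: comps_def)
    ultimately show "F I * G J * ribbon_coeff (a + b) D (basis (I @ J)) =
      (if lower D a \<subseteq> Des I then F I else 0) * (if upper D a \<subseteq> Des J then G J else 0)"
      using subset_Des_append_iff[OF _ _ D] by (simp add: ribbon_coeff_basis)
  qed
  also have "\<dots> = ribbon_coeff a (lower D a) F * ribbon_coeff b (upper D a) G"
    by (simp add: ribbon_coeff_def sum.inter_filter finite_comps sum_product)
  finally show ?thesis .
qed

section \<open>The ribbon expansion of \<open>Stilde\<close>\<close>

lemma S_eq_basis: "S j = basis (if j = 0 then [] else [j])"
  by (simp add: S_def SB_eq_basis_filter)

lemma S_0: "S 0 = basis []"
  by (simp add: S_eq_basis)

lemma Sym_S: "S j \<in> Sym j"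
  using Sym_SB[of "[j]"] by (simp add: S_def)

lemma ribbon_coeff_S: "ribbon_coeff j E (S j) = (if E = {} then 1 else 0)"
  by (auto simp: S_eq_basis ribbon_coeff_basis comps_def)

lemma Lambda_0: "Lambda 0 = basis []"
  by (simp add: Lambda_def ribbon_Nil)

lemma Sym_Lambda: "Lambda k \<in> Sym k"
  unfolding Lambda_def by (rule Sym_ribbon[OF replicate_1_in_comps])

lemma ribbon_coeff_Lambda: "ribbon_coeff k E (Lambda k) = (if E = {1..<k} then 1 else 0)"
  unfolding Lambda_def ribbon_coeff_ribbon[OF replicate_1_in_comps] Des_replicate_1 by (rule refl)

lemma Sym_Lambda_S: "k \<le> m \<Longrightarrow> mul (Lambda k) (S (m - k)) \<in> Sym m"
  using Sym_mul[OF Sym_Lambda Sym_S, of k "m - k"] by simp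

lemma Stilde_0: "Stilde 0 = basis []"
  by (simp add: Stilde_def Lambda_0 S_0)

lemma Sym_Stilde: "Stilde m \<in> Sym m"
  unfolding Stilde_def by (intro Sym_sum Sym_Lambda_S) simp

definition hook_des :: "nat set \<Rightarrow> nat \<Rightarrow> bool" where
  "hook_des D k \<longleftrightarrow> {1..<k} \<subseteq> D \<and> D \<subseteq> {1..k}"

lemma ribbon_coeff_Lambda_S:
  assumes "k \<le> m" "D \<subseteq> {1..<m}"
  shows "ribbon_coeff m D (mul (Lambda k) (S (m - k))) = (if hook_des D k then 1 else 0)"
proof -
  have "ribbon_coeff m D (mul (Lambda k) (S (m - k)))
      = ribbon_coeff k (lower D k) (Lambda k) * ribbon_coeff (m - k) (upper D k) (S (m - k))"
    using ribbon_coeff_mul[OF Sym_Lambda Sym_S, of "D" k "m - k"] assms by simp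
  also have "\<dots> = (if lower D k = {1..<k} \<and> upper D k = {} then 1 else 0)"
    by (simp add: ribbon_coeff_Lambda ribbon_coeff_S)
  also have "lower D k = {1..<k} \<and> upper D k = {} \<longleftrightarrow> hook_des D k"
    using assms(2) by (auto simp: hook_des_def lower_def upper_def subset_iff not_less)
  finally show ?thesis .
qed

definition peaks :: "nat set \<Rightarrow> nat set" where
  "peaks D = {x\<in>D. x \<noteq> 1 \<and> x - 1 \<notin> D}"

lemma interval_if_peaks_empty:
  assumes "peaks D = {}" "finite D" "0 \<notin> D"
  shows "D = {1..card D}"
proof -
  have down: "{1..x} \<subseteq> D" if "x \<in> D" for x
    using that
  proof (induct x)
    case (Suc x)
    show ?case
    proof (cases "x = 0")
      case False
      then have "x \<in> D" using Suc.prems assms(1) by (auto simp: peaks_def)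
      then show ?thesis using Suc by (auto simp: le_Suc_eq)
    qed (use Suc in auto)
  qed simp
  show ?thesis
  proof (cases "D = {}")
    case False
    then have "D = {1..Max D}"
      using down[of "Max D"] assms(2,3) by (auto simp: Suc_le_eq intro: Nat.gr0I)
    then show ?thesis by (metis card_atLeastAtMost diff_Suc_1)
  qed simp
qed

text \<open>The descent sets of the two hooks in \<open>\<Lambda>\<^sub>k S\<^sub>m\<^sub>-\<^sub>k\<close> are \<open>{1..<k}\<close> and \<open>{1..k}\<close>, so a
  peak-free \<open>D = {1..t}\<close> occurs exactly for \<open>k = t\<close> and \<open>k = t + 1\<close>.\<close>

lemma hook_des_set:
  assumes "0 < m" "D \<subseteq> {1..<m}"
  shows "{k\<in>{..m}. hook_des D k} = (if peaks D = {} then {card D, Suc (card D)} else {})"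
proof (cases "peaks D = {}")
  case True
  define t where "t = card D"
  have Dt: "D = {1..t}"
    using interval_if_peaks_empty[OF True] assms finite_subset t_def by fastforce
  have "t < m"
  proof (cases "t = 0")
    case False
    then have "t \<in> D" using Dt by simp
    then show ?thesis using assms by auto
  qed (use assms in simp)
  have "hook_des D k \<longleftrightarrow> k = t \<or> k = Suc t" for k
  proof
    assume h: "hook_des D k"
    then have "\<not> Suc t < k" using Dt by (auto simp: hook_des_def subset_iff)
    moreover have "t \<le> k" using h Dt by (cases t) (auto simp: hook_des_def subset_iff)
    ultimately show "k = t \<or> k = Suc t" by linarith
  qed (auto simp: hook_des_def Dt)
  then show ?thesis
    using True \<open>t < m\<close> t_def by auto
next
  case False
  then obtain x where x: "x \<in> D" "x \<noteq> 1" "x - 1 \<notin> D" by (auto simp: peaks_def)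
  have "\<not> hook_des D k" for k
  proof
    assume "hook_des D k"
    then have "x \<le> k" "2 \<le> x" using x assms(2) by (auto simp: hook_des_def)
    then have "x - 1 \<in> {1..<k}" by auto
    then show False using \<open>hook_des D k\<close> x by (auto simp: hook_des_def)
  qed
  then show ?thesis using False by simp
qed

lemma ribbon_coeff_Stilde:
  assumes "0 < m" "D \<subseteq> {1..<m}"
  shows "ribbon_coeff m D (Stilde m) = (if peaks D = {} then 2 else 0)"
proof -
  have "ribbon_coeff m D (Stilde m) = (\<Sum>k\<le>m. if hook_des D k then 1 else 0)"
    unfolding Stilde_def ribbon_coeff_sum by (rule sum.cong) (use ribbon_coeff_Lambda_S assms in auto)
  also have "\<dots> = of_nat (card {k\<in>{..m}. hook_des D k})"
    by (simp add: sum.If_cases Int_def)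
  also have "\<dots> = (if peaks D = {} then 2 else 0)"
    unfolding hook_des_set[OF assms] by simp
  finally show ?thesis .
qed

definition alt_Lambda_S :: "nat \<Rightarrow> nsym" where
  "alt_Lambda_S m = (\<Sum>j\<le>m. scale ((-1) ^ j) (mul (Lambda j) (S (m - j))))"

lemma alt_Lambda_S_eq_0:
  assumes "0 < m"
  shows "alt_Lambda_S m = 0"
  unfolding alt_Lambda_S_def
proof (rule Sym_eqI_ribbon_coeff)
  show "(\<Sum>j\<le>m. scale ((-1) ^ j) (mul (Lambda j) (S (m - j)))) \<in> Sym m"
    by (intro Sym_sum Sym_scale Sym_Lambda_S) simp
  fix J assume J: "J \<in> comps m"
  have D: "Des J \<subseteq> {1..<m}" using Des_subset[OF J] .
  have "ribbon_coeff m (Des J) (\<Sum>j\<le>m. scale ((-1) ^ j) (mul (Lambda j) (S (m - j))))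
      = (\<Sum>j\<le>m. (-1) ^ j * (if hook_des (Des J) j then 1 else 0))"
    unfolding ribbon_coeff_sum ribbon_coeff_scale
    by (rule sum.cong[OF refl]) (simp add: ribbon_coeff_Lambda_S[OF _ D])
  also have "\<dots> = (\<Sum>j\<in>{k\<in>{..m}. hook_des (Des J) k}. (-1) ^ j)"
    by (simp add: sum.inter_filter[symmetric] if_distrib cong: if_cong)
  also have "\<dots> = 0"
    unfolding hook_des_set[OF assms D] by simp
  finally show "ribbon_coeff m (Des J) (\<Sum>j\<le>m. scale ((-1) ^ j) (mul (Lambda j) (S (m - j)))) =
    ribbon_coeff m (Des J) 0"
    by (simp add: ribbon_coeff_def)
qed simp

section \<open>The map \<open>\<theta>\<close> and the ribbon expansion of \<open>\<theta>(S\<^sup>I)\<close>\<close>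

definition theta_word :: "nat list \<Rightarrow> nsym" where
  "theta_word I = prodl (map Stilde I)"

lemma theta_eq_linext: "theta F = linext theta_word F"
  by (simp add: theta_def linext_def supp_def scal_eq_scale theta_word_def)

lemma theta_word_Nil [simp]: "theta_word [] = basis []"
  by (simp add: theta_word_def prodl_def SB_eq_basis_filter)

lemma theta_word_Cons: "theta_word (i # I) = mul (Stilde i) (theta_word I)"
  by (simp add: theta_word_def prodl_def)

lemma Sym_theta_word: "theta_word I \<in> Sym (sum_list I)"
proof (induct I)
  case Nil
  then show ?case by (simp add: Sym_basis comps_0)
next
  case (Cons i I)
  then show ?case using Sym_mul[OF Sym_Stilde Cons] by (simp add: theta_word_Cons)
qed

lemma finite_supp_theta_word: "finite (supp (theta_word I))"
  by (rule Sym_finite_supp[OF Sym_theta_word])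

lemma theta_word_append: "theta_word (I @ J) = mul (theta_word I) (theta_word J)"
  by (induct I) (simp_all add: theta_word_Cons mul_assoc)

lemma theta_word_filter: "theta_word (filter (\<lambda>x. x \<noteq> 0) I) = theta_word I"
  by (induct I) (auto simp: theta_word_Cons Stilde_0)

lemma theta_basis [simp]: "theta (basis I) = theta_word I"
  by (simp add: theta_eq_linext)

lemma theta_SB: "theta (SB I) = theta_word I"
  unfolding SB_eq_basis_filter theta_basis theta_word_filter ..

lemma theta_add: "finite (supp F) \<Longrightarrow> finite (supp G) \<Longrightarrow> theta (F + G) = theta F + theta G"
  by (simp add: theta_eq_linext linext_add)

lemma theta_scale: "finite (supp F) \<Longrightarrow> theta (scale c F) = scale c (theta F)"
  by (simp add: theta_eq_linext linext_scale)

lemma theta_zero [simp]: "theta 0 = 0"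
  by (simp add: theta_eq_linext linext_def)

lemma theta_mul:
  assumes "finite (supp X)" "finite (supp Y)"
  shows "theta (mul X Y) = mul (theta X) (theta Y)"
  unfolding theta_eq_linext
  by (rule linext_mul[OF assms])
    (rule theta_word_append, rule mul_sum_left, rule mul_sum_right, rule mul_scale_left, rule mul_scale_right)

lemma theta_Sym: "F \<in> Sym n \<Longrightarrow> theta F = (\<Sum>I\<in>comps n. scale (F I) (theta_word I))"
  by (simp add: theta_eq_linext linext_Sym)

lemma Sym_theta: "F \<in> Sym n \<Longrightarrow> theta F \<in> Sym n"
  unfolding theta_Sym
proof (intro Sym_sum Sym_scale)
  fix I assume "I \<in> comps n"
  then show "theta_word I \<in> Sym n" using Sym_theta_word[of I] by (simp add: comps_def)
qed

definition covers :: "nat set \<Rightarrow> nat set \<Rightarrow> bool" where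
  "covers E P \<longleftrightarrow> (\<forall>x\<in>P. x \<in> E \<or> x - 1 \<in> E)"

lemma HP_eq_peaks: "HP J = peaks (Des J)"
  by (simp add: HP_def peaks_def)

lemma mem_peaks_lower: "x \<in> peaks (lower D a) \<longleftrightarrow> x < a \<and> x \<in> peaks D"
  by (auto simp: peaks_def lower_def)

lemma mem_peaks_upper: "y \<in> peaks (upper D a) \<longleftrightarrow> 1 < y \<and> a + y \<in> peaks D"
proof -
  have "y \<in> peaks (upper D a) \<longleftrightarrow> 0 < y \<and> a + y \<in> D \<and> y \<noteq> 1 \<and> \<not> (0 < y - 1 \<and> a + (y - 1) \<in> D)"
    by (simp add: peaks_def mem_upper_iff)
  also have "\<dots> \<longleftrightarrow> 1 < y \<and> a + y \<in> peaks D"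
    by (cases "1 < y") (auto simp: peaks_def)
  finally show ?thesis .
qed

lemma covers_peaks_upper:
  assumes "covers (insert i ((+) i ` E')) (peaks D)"
  shows "covers E' (peaks (upper D i))"
  unfolding covers_def
proof
  fix y assume "y \<in> peaks (upper D i)"
  then have "1 < y" "i + y \<in> peaks D" by (simp_all add: mem_peaks_upper)
  then have "i + y \<in> insert i ((+) i ` E') \<or> i + y - 1 \<in> insert i ((+) i ` E')"
    using assms by (auto simp: covers_def)
  then show "y \<in> E' \<or> y - 1 \<in> E'"
  proof
    assume "i + y - 1 \<in> insert i ((+) i ` E')"
    then obtain z where "z \<in> E'" "i + y - 1 = i + z" using \<open>1 < y\<close> by auto
    then have "z = y - 1" by simp
    then show ?thesis using \<open>z \<in> E'\<close> by simp
  qed (use \<open>1 < y\<close> in auto)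
qed

lemma covers_Cons_peaks:
  assumes E': "\<forall>y\<in>E'. 0 < y"
  shows "covers (insert i ((+) i ` E')) (peaks D) \<longleftrightarrow>
    peaks (lower D i) = {} \<and> covers E' (peaks (upper D i))"
    (is "covers ?E _ \<longleftrightarrow> _")
proof
  assume cov: "covers ?E (peaks D)"
  have "x \<notin> peaks (lower D i)" for x
  proof
    assume "x \<in> peaks (lower D i)"
    then have "x < i" "x \<in> ?E \<or> x - 1 \<in> ?E" using cov by (auto simp: mem_peaks_lower covers_def)
    then show False using E' by auto
  qed
  then show "peaks (lower D i) = {} \<and> covers E' (peaks (upper D i))"
    using covers_peaks_upper[OF cov] by blast
next
  assume h: "peaks (lower D i) = {} \<and> covers E' (peaks (upper D i))"
  show "covers ?E (peaks D)"
    unfolding covers_def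
  proof
    fix x assume x: "x \<in> peaks D"
    consider "x < i" | "x = i" | "x = i + 1" | "i + 1 < x" by linarith
    then show "x \<in> ?E \<or> x - 1 \<in> ?E"
    proof cases
      case 1
      then show ?thesis using h x mem_peaks_lower by blast
    next
      case 4
      then have "x - i \<in> peaks (upper D i)" using x by (simp add: mem_peaks_upper)
      then have "x - i \<in> E' \<or> x - i - 1 \<in> E'" using h by (auto simp: covers_def)
      then have "i + (x - i) \<in> ?E \<or> i + (x - i - 1) \<in> ?E" by blast
      then show ?thesis using 4 by simp
    qed auto
  qed
qed

theorem ribbon_coeff_theta_word:
  "I \<in> comps n \<Longrightarrow> D \<subseteq> {1..<n} \<Longrightarrow>
    ribbon_coeff n D (theta_word I) = (if covers (Des I) (peaks D) then 2 ^ length I else 0)"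
proof (induct I arbitrary: n D)
  case Nil
  then have "n = 0" "D = {}" by (auto simp: comps_def)
  then show ?case by (simp add: ribbon_coeff_basis comps_0 covers_def peaks_def)
next
  case (Cons i I)
  from Cons.prems(1) have i: "0 < i" "i \<le> n" and I: "I \<in> comps (n - i)" by (auto simp: comps_Cons)
  have lower: "lower D i \<subseteq> {1..<i}" using Cons.prems(2) by (auto simp: lower_def)
  have upper: "upper D i \<subseteq> {1..<n - i}"
    using Cons.prems(2) unfolding subset_iff by (auto simp: mem_upper_iff)
  have "ribbon_coeff n D (theta_word (i # I)) = ribbon_coeff (i + (n - i)) D (mul (Stilde i) (theta_word I))"
    using i by (simp add: theta_word_Cons)
  also have "\<dots> = ribbon_coeff i (lower D i) (Stilde i) * ribbon_coeff (n - i) (upper D i) (theta_word I)"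
    by (rule ribbon_coeff_mul[OF Sym_Stilde]) (use Sym_theta_word[of I] I i Cons.prems(2) in \<open>auto simp: comps_def\<close>)
  also have "\<dots> = (if peaks (lower D i) = {} \<and> covers (Des I) (peaks (upper D i)) then 2 ^ length (i # I) else 0)"
    using ribbon_coeff_Stilde[OF i(1) lower] Cons.hyps[OF I upper] by simp
  also have "peaks (lower D i) = {} \<and> covers (Des I) (peaks (upper D i)) \<longleftrightarrow> covers (Des (i # I)) (peaks D)"
  proof (cases "I = []")
    case True
    then have "lower D i = D" "upper D i = {}"
      using I i Cons.prems(2) by (auto simp: comps_def lower_def upper_def)
    then show ?thesis using True by (simp add: covers_def peaks_def)
  next
    case False
    have "\<forall>y\<in>Des I. 0 < y" using Des_subset[OF I] by auto
    then show ?thesis using covers_Cons_peaks False by (simp add: Des_Cons)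
  qed
  finally show ?case .
qed


section \<open>\<open>\<theta>(Sym\<^sub>n)\<close> is the peak space\<close>

lemma HP_in_peaksets:
  assumes "J \<in> comps n"
  shows "HP J \<in> peaksets n"
  using Des_subset[OF assms] by (fastforce simp: HP_def peaksets_def)

lemma finite_peaksets: "finite (peaksets n)"
  by (rule finite_subset[of _ "Pow {2..n - 1}"]) (auto simp: peaksets_def)

lemma Peak_iff: "F \<in> Peak n \<longleftrightarrow> (\<exists>c. F = (\<Sum>P\<in>peaksets n. scale (c P) (PiP n P)))"
  by (simp add: Peak_def scal_eq_scale)

lemma eq_sum_PiP_if_ribbon_coeff_HP:
  assumes F: "F \<in> Sym n" and g: "\<And>J. J \<in> comps n \<Longrightarrow> ribbon_coeff n (Des J) F = g (HP J)"
  shows "F = (\<Sum>P\<in>peaksets n. scale (g P) (PiP n P))"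
proof -
  have "F = (\<Sum>J\<in>comps n. scale (g (HP J)) (ribbon J))"
    using ribbon_expand[OF F] g by simp
  also have "\<dots> = (\<Sum>P\<in>peaksets n. \<Sum>J\<in>{J. J \<in> comps n \<and> HP J = P}. scale (g (HP J)) (ribbon J))"
    by (rule sum.group[symmetric]) (use finite_comps finite_peaksets HP_in_peaksets in auto)
  also have "\<dots> = (\<Sum>P\<in>peaksets n. scale (g P) (PiP n P))"
    by (rule sum.cong[OF refl]) (simp add: PiP_def scale_sum)
  finally show ?thesis .
qed

lemma theta_word_PiP_expansion:
  assumes I: "I \<in> comps n"
  shows "theta_word I = (\<Sum>P\<in>peaksets n. scale (if covers (Des I) P then 2 ^ length I else 0) (PiP n P))"
proof (rule eq_sum_PiP_if_ribbon_coeff_HP)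
  show "theta_word I \<in> Sym n" using Sym_theta_word[of I] I by (simp add: comps_def)
qed (simp add: ribbon_coeff_theta_word[OF I Des_subset] HP_eq_peaks)

lemma theta_in_Peak:
  assumes F: "F \<in> Sym n"
  shows "theta F \<in> Peak n"
proof -
  define g where "g P = (\<Sum>I\<in>comps n. F I * (if covers (Des I) P then 2 ^ length I else 0))" for P
  have "ribbon_coeff n (Des J) (theta F) = g (HP J)" if J: "J \<in> comps n" for J
    unfolding g_def theta_Sym[OF F] ribbon_coeff_sum ribbon_coeff_scale
    by (simp add: ribbon_coeff_theta_word[OF _ Des_subset[OF J]] HP_eq_peaks)
  then have "theta F = (\<Sum>P\<in>peaksets n. scale (g P) (PiP n P))"
    by (intro eq_sum_PiP_if_ribbon_coeff_HP Sym_theta F)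
  then show ?thesis by (auto simp: Peak_iff)
qed

lemma theta_image_add:
  assumes "X \<in> theta ` Sym n" "Y \<in> theta ` Sym n"
  shows "X + Y \<in> theta ` Sym n"
proof -
  obtain F G where FG: "F \<in> Sym n" "G \<in> Sym n" "X = theta F" "Y = theta G"
    using assms by blast
  then have "X + Y = theta (F + G)" by (simp add: theta_add Sym_finite_supp)
  with FG show ?thesis by (blast intro: Sym_add)
qed

lemma theta_image_scale:
  assumes "X \<in> theta ` Sym n"
  shows "scale c X \<in> theta ` Sym n"
proof -
  obtain F where F: "F \<in> Sym n" "X = theta F"
    using assms by blast
  then have "scale c X = theta (scale c F)" by (simp add: theta_scale Sym_finite_supp)
  with F show ?thesis by (blast intro: Sym_scale)
qed

lemma theta_image_sum: "(\<And>a. a \<in> A \<Longrightarrow> f a \<in> theta ` Sym n) \<Longrightarrow> sum f A \<in> theta ` Sym n"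
proof (induct A rule: infinite_finite_induct)
  case (infinite A)
  have "0 = theta 0" by simp
  with infinite show ?case by (metis Sym_zero image_eqI sum.infinite)
next
  case empty
  have "0 = theta 0" by simp
  then show ?case by (metis Sym_zero image_eqI sum.empty)
qed (simp add: theta_image_add)

definition covered_by :: "nat set \<Rightarrow> nat set \<Rightarrow> bool" where
  "covered_by Q P \<longleftrightarrow> (\<forall>x\<in>P. x \<in> Q \<or> x + 1 \<in> Q)"

lemma sum_less_if_covered_by:
  assumes fQ: "finite Q" and "0 \<notin> Q" and nc: "\<forall>x\<in>P. x + 1 \<notin> P"
    and a: "covered_by Q P" and ne: "P \<noteq> Q"
  shows "\<Sum>P < \<Sum>Q"
proof -
  define f where "f x = (if x \<in> Q then x else x + 1)" for x
  have fQ': "f ` P \<subseteq> Q" using a by (auto simp: covered_by_def f_def)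
  have inj: "inj_on f P"
    using nc by (auto simp: inj_on_def f_def split: if_splits)
  have fP: "finite P"
    using finite_subset[OF fQ' fQ] inj by (rule finite_imageD)
  have le2: "\<Sum>(f ` P) \<le> \<Sum>Q" by (rule sum_mono2[OF fQ fQ']) simp
  show ?thesis
  proof (cases "P \<subseteq> Q")
    case True
    then obtain q where q: "q \<in> Q" "q \<notin> P" using ne by auto
    have "\<Sum>(insert q P) \<le> \<Sum>Q" using True q by (intro sum_mono2[OF fQ]) auto
    then show ?thesis using q fP \<open>0 \<notin> Q\<close> by (cases "q = 0") auto
  next
    case False
    then obtain x where x: "x \<in> P" "x \<notin> Q" by auto
    have "\<Sum>P < sum f P"
      by (rule sum_strict_mono_ex1[OF fP]) (use x in \<open>auto simp: f_def\<close>)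
    then show ?thesis using sum.reindex[OF inj, of id] le2 by simp
  qed
qed

lemma covers_iff_covered_by:
  fixes P Q :: "nat set"
  assumes "0 \<notin> Q" "0 \<notin> P"
  shows "covers ((\<lambda>x. x - 1) ` Q) P \<longleftrightarrow> covered_by Q P"
proof -
  have shift: "x \<in> (\<lambda>x. x - 1) ` Q \<longleftrightarrow> x + 1 \<in> Q" for x
  proof
    assume "x \<in> (\<lambda>x. x - 1) ` Q"
    then obtain q where "q \<in> Q" "x = q - 1" by blast
    moreover have "q \<noteq> 0" using assms(1) \<open>q \<in> Q\<close> by metis
    ultimately show "x + 1 \<in> Q" by simp
  next
    assume "x + 1 \<in> Q"
    then show "x \<in> (\<lambda>x. x - 1) ` Q" by (intro image_eqI[of _ _ "x + 1"]) auto
  qed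
  have "x - 1 + 1 = x" if "x \<in> P" for x
    using that assms(2) by (cases x) auto
  then show ?thesis
    unfolding covers_def covered_by_def shift by auto
qed

lemma zero_notin_peaksets: "P \<in> peaksets n \<Longrightarrow> 0 \<notin> P"
  by (auto simp: peaksets_def)

lemma sum_covered_PiP_in_theta_image:
  assumes Q: "Q \<in> peaksets n"
  shows "(\<Sum>P\<in>{P\<in>peaksets n. covered_by Q P}. PiP n P) \<in> theta ` Sym n"
proof -
  have "(\<lambda>x. x - 1) ` Q \<subseteq> {1..<n}" using Q by (force simp: peaksets_def)
  then obtain I where I: "I \<in> comps n" "Des I = (\<lambda>x. x - 1) ` Q" using Des_surj by blast
  have "theta_word I = (\<Sum>P\<in>peaksets n. scale (if covered_by Q P then 2 ^ length I else 0) (PiP n P))"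
    unfolding theta_word_PiP_expansion[OF I(1)] I(2)
    by (intro sum.cong refl)
      (simp only: covers_iff_covered_by[OF zero_notin_peaksets[OF Q] zero_notin_peaksets])
  also have "\<dots> = scale (2 ^ length I) (\<Sum>P\<in>{P\<in>peaksets n. covered_by Q P}. PiP n P)"
    by (simp add: scale_sum sum.inter_filter finite_peaksets if_distrib[of "scale c" for c]
        if_distrib[where f = "\<lambda>c. scale c F" for F] cong: if_cong)
  finally have "(\<Sum>P\<in>{P\<in>peaksets n. covered_by Q P}. PiP n P) = scale (1 / 2 ^ length I) (theta_word I)"
    by simp
  then show ?thesis
    using theta_image_scale I(1) Sym_basis theta_basis by (metis image_eqI)
qed

text \<open>Triangularity: \<open>\<Pi>\<^sub>Q\<close> is the leading term of a sum that lies in \<open>\<theta>(Sym\<^sub>n)\<close>, all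
  other terms having smaller element sum.\<close>

lemma PiP_in_theta_image: "Q \<in> peaksets n \<Longrightarrow> PiP n Q \<in> theta ` Sym n"
proof (induct "\<Sum>Q" arbitrary: Q rule: less_induct)
  case less
  let ?A = "{P\<in>peaksets n. covered_by Q P}"
  have QA: "Q \<in> ?A" using less.prems by (simp add: covered_by_def)
  have "(\<Sum>P\<in>?A. PiP n P) = PiP n Q + (\<Sum>P\<in>?A - {Q}. PiP n P)"
    using finite_peaksets QA by (simp add: sum.remove)
  then have eq: "PiP n Q = (\<Sum>P\<in>?A. PiP n P) + scale (-1) (\<Sum>P\<in>?A - {Q}. PiP n P)"
    by (simp add: fun_eq_iff)
  have "(\<Sum>P\<in>?A - {Q}. PiP n P) \<in> theta ` Sym n"
  proof (rule theta_image_sum)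
    fix P assume P: "P \<in> ?A - {Q}"
    have "finite Q" using less.prems finite_subset by (auto simp: peaksets_def)
    then have "\<Sum>P < \<Sum>Q"
      using P less.prems by (intro sum_less_if_covered_by) (auto simp: peaksets_def zero_notin_peaksets)
    then show "PiP n P \<in> theta ` Sym n" using less.hyps P by auto
  qed
  then show ?case
    unfolding eq by (intro theta_image_add theta_image_scale sum_covered_PiP_in_theta_image less.prems)
qed

lemma Peak_eq_theta_image: "Peak n = theta ` Sym n"
proof
  show "Peak n \<subseteq> theta ` Sym n"
    by (auto simp: Peak_iff intro!: theta_image_sum theta_image_scale PiP_in_theta_image)
  show "theta ` Sym n \<subseteq> Peak n"
    using theta_in_Peak by blast
qed

section \<open>Matrices and the internal product\<close>

text \<open>\<open>internal_words I J = S\<^sup>I * S\<^sup>J\<close> and \<open>internal_word I G = S\<^sup>I * G\<close>.\<close>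

definition internal_words :: "nat list \<Rightarrow> nat list \<Rightarrow> nsym" where
  "internal_words I J = (\<Sum>M\<in>matrices I J. SB (concat M))"

definition internal_word :: "nat list \<Rightarrow> nsym \<Rightarrow> nsym" where
  "internal_word I G = linext (internal_words I) G"

lemma internal_eq_linext: "internal F G = linext (\<lambda>I. internal_word I G) F"
proof -
  have "internal F G = (\<Sum>I\<in>supp F. \<Sum>J\<in>supp G. scale (F I * G J) (internal_words I J))"
    by (simp only: internal_def supp_def scal_eq_scale internal_words_def[symmetric])
  also have "\<dots> = linext (\<lambda>I. internal_word I G) F"
    unfolding linext_def internal_word_def scale_sum by (simp add: mult.commute)
  finally show ?thesis .
qed

lemma sum_list_concat: "sum_list (concat M) = sum_list (map sum_list (M :: nat list list))"
  by (induct M) auto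

lemma map_sum_list_matrices: "M \<in> matrices I J \<Longrightarrow> map sum_list M = I"
  by (auto simp: matrices_def intro: nth_equalityI)

lemma finite_matrices: "finite (matrices I J)"
proof -
  let ?R = "{r. set r \<subseteq> {..sum_list I} \<and> length r \<le> length J}"
  have "matrices I J \<subseteq> {M. set M \<subseteq> ?R \<and> length M \<le> length I}"
  proof
    fix M assume M: "M \<in> matrices I J"
    have "set M \<subseteq> ?R"
    proof
      fix r assume "r \<in> set M"
      then obtain k where k: "k < length M" "r = M ! k" by (auto simp: in_set_conv_nth)
      then have "length r = length J" "sum_list r = I ! k" "k < length I" using M by (auto simp: matrices_def)
      moreover have "I ! k \<le> sum_list I" using \<open>k < length I\<close> by (simp add: elem_le_sum_list)
      ultimately show "r \<in> ?R" using member_le_sum_list[of _ r] by fastforce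
    qed
    then show "M \<in> {M. set M \<subseteq> ?R \<and> length M \<le> length I}" using M by (simp add: matrices_def)
  qed
  moreover have "finite ?R" by (rule finite_lists_length_le) simp
  ultimately show ?thesis using finite_lists_length_le finite_subset by blast
qed

lemma Sym_internal_words: "internal_words I J \<in> Sym (sum_list I)"
  unfolding internal_words_def
proof (rule Sym_sum)
  fix M assume "M \<in> matrices I J"
  then have "sum_list (concat M) = sum_list I" by (simp add: sum_list_concat map_sum_list_matrices)
  then show "SB (concat M) \<in> Sym (sum_list I)" using Sym_SB[of "concat M"] by simp
qed

lemma matrices_Nil: "matrices [] J = (if \<forall>l<length J. J ! l = 0 then {[]} else {})"
  by (auto simp: matrices_def)

lemma internal_words_Nil: "internal_words [] J = (if \<forall>l<length J. J ! l = 0 then basis [] else 0)"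
  by (auto simp: internal_words_def matrices_Nil SB_eq_basis_filter)

definition lists_below :: "nat list \<Rightarrow> nat list set" where
  "lists_below J = {r. length r = length J \<and> (\<forall>l<length J. r ! l \<le> J ! l)}"

definition list_minus :: "nat list \<Rightarrow> nat list \<Rightarrow> nat list" where
  "list_minus J r = map2 (-) J r"

lemma finite_lists_below: "finite (lists_below J)"
proof -
  have "lists_below J \<subseteq> {r. set r \<subseteq> {..sum_list J} \<and> length r \<le> length J}"
  proof
    fix r assume r: "r \<in> lists_below J"
    have "set r \<subseteq> {..sum_list J}"
    proof
      fix x assume "x \<in> set r"
      then obtain l where "l < length r" "x = r ! l" by (auto simp: in_set_conv_nth)
      then show "x \<in> {..sum_list J}" using r elem_le_sum_list[of l J] by (auto simp: lists_below_def)
    qed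
    then show "r \<in> {r. set r \<subseteq> {..sum_list J} \<and> length r \<le> length J}" using r by (simp add: lists_below_def)
  qed
  then show ?thesis by (rule finite_subset) (rule finite_lists_length_le, simp)
qed

lemma Cons_in_matrices_iff:
  "r # M \<in> matrices (i # I) J \<longleftrightarrow> r \<in> lists_below J \<and> sum_list r = i \<and> M \<in> matrices I (list_minus J r)"
proof
  assume "r # M \<in> matrices (i # I) J"
  then have "length M = length I" "length r = length J" "sum_list r = i"
    and "\<forall>k<length I. length (M ! k) = length J \<and> sum_list (M ! k) = I ! k"
    and "\<forall>l<length J. r ! l + (\<Sum>k<length I. M ! k ! l) = J ! l"
    by (auto simp: matrices_def All_less_Suc2 sum.lessThan_Suc_shift simp del: sum.lessThan_Suc)
  then show "r \<in> lists_below J \<and> sum_list r = i \<and> M \<in> matrices I (list_minus J r)"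
    by (auto simp: matrices_def lists_below_def list_minus_def)
next
  assume h: "r \<in> lists_below J \<and> sum_list r = i \<and> M \<in> matrices I (list_minus J r)"
  then have "length r = length J" "\<forall>l<length J. r ! l \<le> J ! l" "length M = length I"
    and "\<forall>k<length I. length (M ! k) = length J \<and> sum_list (M ! k) = I ! k"
    and "\<forall>l<length J. (\<Sum>k<length I. M ! k ! l) = J ! l - r ! l"
    by (auto simp: matrices_def lists_below_def list_minus_def)
  then show "r # M \<in> matrices (i # I) J"
    using h by (auto simp: matrices_def All_less_Suc2 sum.lessThan_Suc_shift simp del: sum.lessThan_Suc)
qed

lemma matrices_Cons:
  "matrices (i # I) J =
    (\<lambda>(r, M). r # M) ` (SIGMA r:{r\<in>lists_below J. sum_list r = i}. matrices I (list_minus J r))"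
proof
  show "matrices (i # I) J \<subseteq> (\<lambda>(r, M). r # M) ` (SIGMA r:{r\<in>lists_below J. sum_list r = i}. matrices I (list_minus J r))"
  proof
    fix M assume M: "M \<in> matrices (i # I) J"
    then obtain r M' where "M = r # M'" by (cases M) (auto simp: matrices_def)
    then show "M \<in> (\<lambda>(r, M). r # M) ` (SIGMA r:{r\<in>lists_below J. sum_list r = i}. matrices I (list_minus J r))"
      using M Cons_in_matrices_iff by force
  qed
qed (use Cons_in_matrices_iff in force)

lemma internal_words_Cons:
  "internal_words (i # I) J =
    (\<Sum>r\<in>{r\<in>lists_below J. sum_list r = i}. mul (SB r) (internal_words I (list_minus J r)))"
proof -
  let ?R = "{r\<in>lists_below J. sum_list r = i}"
  have inj: "inj_on (\<lambda>(r, M). r # M) (SIGMA r:?R. matrices I (list_minus J r))"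
    by (auto intro: inj_onI)
  have "internal_words (i # I) J = (\<Sum>(r,M)\<in>(SIGMA r:?R. matrices I (list_minus J r)). SB (r @ concat M))"
    unfolding internal_words_def matrices_Cons sum.reindex[OF inj] by (simp add: comp_def case_prod_unfold)
  also have "\<dots> = (\<Sum>r\<in>?R. \<Sum>M\<in>matrices I (list_minus J r). SB (r @ concat M))"
    by (rule sum.Sigma[symmetric]) (auto simp: finite_lists_below finite_matrices)
  also have "\<dots> = (\<Sum>r\<in>?R. mul (SB r) (internal_words I (list_minus J r)))"
    by (simp add: internal_words_def mul_sum_right mul_SB)
  finally show ?thesis .
qed

lemma matrices_single:
  assumes "sum_list I = n"
  shows "matrices I [n] = {map (\<lambda>x. [x]) I}"
proof
  show "matrices I [n] \<subseteq> {map (\<lambda>x. [x]) I}"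
  proof
    fix M assume M: "M \<in> matrices I [n]"
    have "M = map (\<lambda>x. [x]) I"
    proof (rule nth_equalityI)
      show "length M = length (map (\<lambda>x. [x]) I)" using M by (simp add: matrices_def)
      fix k assume "k < length M"
      then have "length (M ! k) = 1" "sum_list (M ! k) = I ! k" "k < length I"
        using M by (auto simp: matrices_def)
      then show "M ! k = map (\<lambda>x. [x]) I ! k"
        by (cases "M ! k") auto
    qed
    then show "M \<in> {map (\<lambda>x. [x]) I}" by simp
  qed
  show "{map (\<lambda>x. [x]) I} \<subseteq> matrices I [n]"
    using assms by (simp add: matrices_def sum_list_sum_nth atLeast0LessThan)
qed

lemma internal_words_single: "sum_list I = n \<Longrightarrow> internal_words I [n] = SB I"
  by (simp add: internal_words_def matrices_single)

definition insert_zero :: "nat \<Rightarrow> nat list \<Rightarrow> nat list" where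
  "insert_zero p r = take p r @ 0 # drop p r"

definition remove_nth :: "nat \<Rightarrow> nat list \<Rightarrow> nat list" where
  "remove_nth p r = take p r @ drop (Suc p) r"

lemma length_insert_zero: "p \<le> length r \<Longrightarrow> length (insert_zero p r) = Suc (length r)"
  by (simp add: insert_zero_def)

lemma sum_list_insert_zero: "sum_list (insert_zero p r) = sum_list r"
  by (simp add: insert_zero_def) (metis append_take_drop_id sum_list_append)

lemma nth_insert_zero: "p \<le> length r \<Longrightarrow> l < Suc (length r) \<Longrightarrow>
    insert_zero p r ! l = (if l < p then r ! l else if l = p then 0 else r ! (l - 1))"
  by (auto simp: insert_zero_def nth_append min_def nth_Cons')

lemma filter_insert_zero: "filter ((<) (0::nat)) (insert_zero p r) = filter ((<) 0) r"
  by (simp add: insert_zero_def) (metis append_take_drop_id filter_append)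

lemma insert_zero_remove_nth: "p < length r \<Longrightarrow> r ! p = 0 \<Longrightarrow> insert_zero p (remove_nth p r) = r"
  by (simp add: insert_zero_def remove_nth_def min_def) (metis id_take_nth_drop)

lemma length_remove_nth: "p < length r \<Longrightarrow> length (remove_nth p r) = length r - 1"
  by (simp add: remove_nth_def)

lemma nth_remove_nth: "p < length r \<Longrightarrow> l < length r - 1 \<Longrightarrow>
    remove_nth p r ! l = (if l < p then r ! l else r ! Suc l)"
  by (auto simp: remove_nth_def nth_append min_def)

lemma sum_list_remove_nth:
  assumes "p < length r"
  shows "sum_list (remove_nth p r) = sum_list r - r ! p"
proof -
  have "sum_list r = sum_list (take p r) + r ! p + sum_list (drop (Suc p) r)"
    using id_take_nth_drop[OF assms] by (metis add.assoc sum_list.Cons sum_list_append)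
  then show ?thesis by (simp add: remove_nth_def)
qed

lemma insert_zero_inj:
  assumes "p \<le> length r" "p \<le> length r'" "insert_zero p r = insert_zero p r'"
  shows "r = r'"
proof -
  have "take p r = take p r'" "drop p r = drop p r'"
    using assms unfolding insert_zero_def by (auto simp: append_eq_append_conv)
  then show "r = r'" by (metis append_take_drop_id)
qed

lemma map_insert_zero_in_matrices:
  assumes M: "M \<in> matrices I J" and p: "p \<le> length J"
  shows "map (insert_zero p) M \<in> matrices I (insert_zero p J)"
proof -
  have rows: "\<forall>k<length I. length (M ! k) = length J \<and> sum_list (M ! k) = I ! k"
    and cols: "\<forall>l<length J. (\<Sum>k<length I. M ! k ! l) = J ! l"
    and lM: "length M = length I" using M by (auto simp: matrices_def)
  have "(\<Sum>k<length I. insert_zero p (M ! k) ! l) = insert_zero p J ! l"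
    if l: "l < Suc (length J)" for l
  proof -
    have "(\<Sum>k<length I. insert_zero p (M ! k) ! l)
        = (\<Sum>k<length I. if l < p then M ! k ! l else if l = p then 0 else M ! k ! (l - 1))"
      by (rule sum.cong[OF refl]) (use rows p l in \<open>auto simp: nth_insert_zero\<close>)
    also have "\<dots> = insert_zero p J ! l"
      using cols p l by (auto simp: nth_insert_zero)
    finally show ?thesis .
  qed
  then show ?thesis
    using rows lM p by (auto simp: matrices_def length_insert_zero sum_list_insert_zero)
qed

lemma map_remove_nth_in_matrices:
  assumes M: "M \<in> matrices I J" and p: "p < length J" "J ! p = 0"
  shows "map (remove_nth p) M \<in> matrices I (remove_nth p J)"
    and "map (insert_zero p) (map (remove_nth p) M) = M"
proof -
  have rows: "\<forall>k<length I. length (M ! k) = length J \<and> sum_list (M ! k) = I ! k"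
    and cols: "\<forall>l<length J. (\<Sum>k<length I. M ! k ! l) = J ! l"
    and lM: "length M = length I" using M by (auto simp: matrices_def)
  have "(\<Sum>k<length I. M ! k ! p) = 0" using cols p by simp
  then have zero: "M ! k ! p = 0" if "k < length I" for k
    using that by simp
  have "(\<Sum>k<length I. remove_nth p (M ! k) ! l) = remove_nth p J ! l"
    if l: "l < length J - 1" for l
  proof -
    have "(\<Sum>k<length I. remove_nth p (M ! k) ! l) = (\<Sum>k<length I. if l < p then M ! k ! l else M ! k ! Suc l)"
      by (rule sum.cong[OF refl]) (use rows p l in \<open>auto simp: nth_remove_nth\<close>)
    also have "\<dots> = remove_nth p J ! l"
      using cols p l by (auto simp: nth_remove_nth)
    finally show ?thesis .
  qed
  then show "map (remove_nth p) M \<in> matrices I (remove_nth p J)"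
    using rows lM p zero by (auto simp: matrices_def length_remove_nth sum_list_remove_nth)
  show "map (insert_zero p) (map (remove_nth p) M) = M"
    by (rule nth_equalityI) (use lM rows zero p insert_zero_remove_nth in auto)
qed

lemma internal_words_remove_zero_column:
  assumes p: "p < length J" "J ! p = 0"
  shows "internal_words I (remove_nth p J) = internal_words I J"
proof -
  have "matrices I J = map (insert_zero p) ` matrices I (remove_nth p J)"
  proof
    show "matrices I J \<subseteq> map (insert_zero p) ` matrices I (remove_nth p J)"
    proof
      fix M assume "M \<in> matrices I J"
      then show "M \<in> map (insert_zero p) ` matrices I (remove_nth p J)"
        using map_remove_nth_in_matrices[OF _ p]
        by (intro image_eqI[of _ _ "map (remove_nth p) M"]) simp_all
    qed
    show "map (insert_zero p) ` matrices I (remove_nth p J) \<subseteq> matrices I J"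
      using map_insert_zero_in_matrices[of _ I "remove_nth p J" p] insert_zero_remove_nth[OF p] p
      by (auto simp: length_remove_nth)
  qed
  moreover have "inj_on (map (insert_zero p)) (matrices I (remove_nth p J))"
  proof (rule inj_onI)
    fix M N assume "M \<in> matrices I (remove_nth p J)" "N \<in> matrices I (remove_nth p J)"
      and e: "map (insert_zero p) M = map (insert_zero p) N"
    then have "length M = length N" "\<forall>k<length M. p \<le> length (M ! k) \<and> p \<le> length (N ! k)"
      using p by (auto simp: matrices_def length_remove_nth)
    then show "M = N"
      using e by (metis (no_types, lifting) insert_zero_inj nth_equalityI nth_map)
  qed
  ultimately have "internal_words I J = (\<Sum>M\<in>matrices I (remove_nth p J). SB (concat (map (insert_zero p) M)))"
    unfolding internal_words_def by (simp add: sum.reindex comp_def)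
  also have "\<dots> = internal_words I (remove_nth p J)"
    unfolding internal_words_def
    by (rule sum.cong[OF refl]) (simp add: SB_eq_basis_filter filter_concat comp_def filter_insert_zero)
  finally show ?thesis by simp
qed

lemma internal_words_filter: "internal_words I (filter (\<lambda>x. x \<noteq> 0) J) = internal_words I J"
proof (induct "length J" arbitrary: J rule: less_induct)
  case less
  show ?case
  proof (cases "0 \<in> set J")
    case False
    then have "filter (\<lambda>x. x \<noteq> 0) J = J" by (induct J) auto
    then show ?thesis by simp
  next
    case True
    then obtain p where p: "p < length J" "J ! p = 0" by (auto simp: in_set_conv_nth)
    have J: "J = take p J @ 0 # drop (Suc p) J"
      using id_take_nth_drop[OF p(1)] p(2) by simp
    have "filter (\<lambda>x. x \<noteq> 0) J = filter (\<lambda>x. x \<noteq> 0) (remove_nth p J)"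
      unfolding remove_nth_def by (subst (1) J) simp
    also have "internal_words I \<dots> = internal_words I (remove_nth p J)"
      using less[of "remove_nth p J"] p by (simp add: length_remove_nth)
    also have "\<dots> = internal_words I J"
      by (rule internal_words_remove_zero_column[OF p])
    finally show ?thesis .
  qed
qed

lemma internal_word_basis [simp]: "internal_word I (basis J) = internal_words I J"
  by (simp add: internal_word_def)

lemma internal_word_SB: "internal_word I (SB J) = internal_words I J"
  unfolding SB_eq_basis_filter internal_word_basis internal_words_filter ..

lemma Sym_internal_word: "finite (supp G) \<Longrightarrow> internal_word I G \<in> Sym (sum_list I)"
  unfolding internal_word_def by (rule Sym_linext) (simp_all add: Sym_internal_words)

lemma internal_word_Nil:
  assumes "G \<in> Sym m"
  shows "internal_word [] G = scale (G []) (basis [])"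
proof -
  have "internal_word [] G = (\<Sum>J\<in>insert [] (supp G). scale (G J) (internal_words [] J))"
    unfolding internal_word_def by (rule linext_eq) (use Sym_finite_supp[OF assms] in auto)
  also have "\<dots> = (\<Sum>J\<in>insert [] (supp G). if J = [] then scale (G J) (basis []) else 0)"
  proof (intro sum.cong refl)
    fix J assume J: "J \<in> insert [] (supp G)"
    show "scale (G J) (internal_words [] J) = (if J = [] then scale (G J) (basis []) else 0)"
    proof (cases "J = []")
      case False
      then obtain a J' where aJ: "J = a # J'" by (cases J) auto
      have "J \<in> supp G" using J False by auto
      then have "0 < J ! 0" using assms aJ by (auto simp: Sym_iff comps_def is_comp_def)
      then have "\<not> (\<forall>l<length J. J ! l = 0)" using aJ by auto
      then show ?thesis using False by (auto simp: internal_words_Nil)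
    qed (simp add: internal_words_Nil)
  qed
  also have "\<dots> = scale (G []) (basis [])"
    using Sym_finite_supp[OF assms] by (simp add: sum.delta')
  finally show ?thesis .
qed

section \<open>The coproduct\<close>

text \<open>Elements of \<open>Sym \<otimes> Sym\<close>, indexed by pairs of words like \<open>nsym\<close>.\<close>

type_synonym nsym2 = "nat list \<times> nat list \<Rightarrow> rat"

definition tensor :: "nsym \<Rightarrow> nsym \<Rightarrow> nsym2" where
  "tensor X Y = (\<lambda>(A, B). X A * Y B)"

definition mul_tensor :: "nsym2 \<Rightarrow> nsym2 \<Rightarrow> nsym2" where
  "mul_tensor T U = (\<lambda>(A, B). \<Sum>k\<le>length A. \<Sum>l\<le>length B. T (take k A, take l B) * U (drop k A, drop l B))"

lemma tensor_apply [simp]: "tensor X Y (A, B) = X A * Y B"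
  by (simp add: tensor_def)

lemma mul_tensor_apply:
  "mul_tensor T U (A, B) = (\<Sum>k\<le>length A. \<Sum>l\<le>length B. T (take k A, take l B) * U (drop k A, drop l B))"
  by (simp add: mul_tensor_def)

lemma mul_tensor_sum_left: "mul_tensor (sum f AA) U = (\<Sum>a\<in>AA. mul_tensor (f a) U)"
  by (rule ext, clarify) (simp only: mul_tensor_apply sum_fun_apply sum_distrib_right sum.swap[of _ AA])

lemma mul_tensor_sum_right: "mul_tensor T (sum f AA) = (\<Sum>a\<in>AA. mul_tensor T (f a))"
  by (rule ext, clarify) (simp only: mul_tensor_apply sum_fun_apply sum_distrib_left sum.swap[of _ AA])

lemma mul_tensor_sum_sum: "mul_tensor (sum f A) (sum g B) = (\<Sum>a\<in>A. \<Sum>b\<in>B. mul_tensor (f a) (g b))"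
  unfolding mul_tensor_sum_left by (simp only: mul_tensor_sum_right)

lemma mul_tensor_scale_left: "mul_tensor (scale c T) U = scale c (mul_tensor T U)"
  by (rule ext, clarify) (simp add: mul_tensor_apply sum_distrib_left algebra_simps)

lemma mul_tensor_scale_right: "mul_tensor T (scale c U) = scale c (mul_tensor T U)"
  by (rule ext, clarify) (simp add: mul_tensor_apply sum_distrib_left algebra_simps)

lemma mul_tensor_tensor: "mul_tensor (tensor X Y) (tensor Z W) = tensor (mul X Z) (mul Y W)"
proof (rule ext, clarify)
  fix A B
  show "mul_tensor (tensor X Y) (tensor Z W) (A, B) = tensor (mul X Z) (mul Y W) (A, B)"
    unfolding mul_tensor_apply tensor_apply mul_apply sum_product
    by (intro sum.cong refl) (simp add: algebra_simps)
qed

lemma tensor_sum_sum: "tensor (sum f A) (sum g B) = (\<Sum>a\<in>A. \<Sum>b\<in>B. tensor (f a) (g b))"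
  by (rule ext, clarify) (simp add: sum_fun_apply sum_product)

lemma tensor_scale_left: "tensor (scale c X) Y = scale c (tensor X Y)"
  by (rule ext, clarify) simp

lemma tensor_scale_right: "tensor X (scale c Y) = scale c (tensor X Y)"
  by (rule ext, clarify) simp

lemma finite_supp_tensor: "finite (supp X) \<Longrightarrow> finite (supp (Y :: nsym)) \<Longrightarrow> finite (supp (tensor X Y))"
  by (rule finite_subset[of _ "supp X \<times> supp Y"]) (auto simp: supp_def)

text \<open>The coproduct \<open>\<Delta>\<close> is the algebra morphism with \<open>\<Delta> S\<^sub>m = (\<Sum>c\<le>m. S\<^sub>c \<otimes> S\<^sub>m\<^sub>-\<^sub>c)\<close>;
  on a word it sums over all entrywise splittings \<open>J = r + (J - r)\<close>.\<close>

definition coprod_word :: "nat list \<Rightarrow> nsym2" where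
  "coprod_word J = (\<Sum>r\<in>lists_below J. tensor (SB r) (SB (list_minus J r)))"

definition coprod :: "nsym \<Rightarrow> nsym2" where
  "coprod F = linext coprod_word F"

lemma lists_below_Nil: "lists_below [] = {[]}"
  by (auto simp: lists_below_def)

lemma lists_below_Cons: "lists_below (j # J) = (\<lambda>(c, r). c # r) ` ({..j} \<times> lists_below J)"
proof
  show "lists_below (j # J) \<subseteq> (\<lambda>(c, r). c # r) ` ({..j} \<times> lists_below J)"
  proof
    fix r assume r: "r \<in> lists_below (j # J)"
    then obtain c r' where "r = c # r'" by (cases r) (auto simp: lists_below_def)
    moreover have "c \<le> j" "r' \<in> lists_below J"
      using r \<open>r = c # r'\<close> by (auto simp: lists_below_def All_less_Suc2)
    ultimately show "r \<in> (\<lambda>(c, r). c # r) ` ({..j} \<times> lists_below J)" by force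
  qed
  show "(\<lambda>(c, r). c # r) ` ({..j} \<times> lists_below J) \<subseteq> lists_below (j # J)"
    by (auto simp: lists_below_def All_less_Suc2)
qed

lemma lists_below_append:
  "lists_below (I @ J) = (\<lambda>(r1, r2). r1 @ r2) ` (lists_below I \<times> lists_below J)"
proof (induct I)
  case Nil
  then show ?case by (force simp: lists_below_Nil)
next
  case (Cons i I)
  then show ?case
    by (auto simp: lists_below_Cons image_iff) blast+
qed

lemma list_minus_Cons: "list_minus (j # J) (c # r) = (j - c) # list_minus J r"
  by (simp add: list_minus_def)

lemma list_minus_append:
  "length r1 = length I \<Longrightarrow> list_minus (I @ J) (r1 @ r2) = list_minus I r1 @ list_minus J r2"
  by (simp add: list_minus_def)

lemma coprod_word_append: "coprod_word (I @ J) = mul_tensor (coprod_word I) (coprod_word J)"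
proof -
  let ?t = "\<lambda>I r. tensor (SB r) (SB (list_minus I r))"
  have inj: "inj_on (\<lambda>(r1, r2). r1 @ r2) (lists_below I \<times> lists_below J)"
    by (rule inj_onI) (auto simp: lists_below_def)
  have "coprod_word (I @ J) = (\<Sum>(r1, r2)\<in>lists_below I \<times> lists_below J. ?t (I @ J) (r1 @ r2))"
    unfolding coprod_word_def lists_below_append sum.reindex[OF inj] by (simp add: comp_def case_prod_unfold)
  also have "\<dots> = (\<Sum>(r1, r2)\<in>lists_below I \<times> lists_below J. mul_tensor (?t I r1) (?t J r2))"
    by (rule sum.cong[OF refl], clarsimp simp: lists_below_def list_minus_append mul_tensor_tensor mul_SB)
  also have "\<dots> = mul_tensor (coprod_word I) (coprod_word J)"
    unfolding coprod_word_def mul_tensor_sum_sum by (rule sum.cartesian_product[symmetric])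
  finally show ?thesis .
qed

lemma finite_supp_coprod_word: "finite (supp (coprod_word J))"
  unfolding coprod_word_def
  by (rule finite_subset[OF supp_sum]) (auto intro!: finite_supp_tensor simp: finite_lists_below SB_eq_basis_filter)

lemma coprod_basis [simp]: "coprod (basis J) = coprod_word J"
  by (simp add: coprod_def)

lemma coprod_scale: "finite (supp F) \<Longrightarrow> coprod (scale c F) = scale c (coprod F)"
  by (simp add: coprod_def linext_scale)

lemma coprod_sum:
  "finite A \<Longrightarrow> (\<And>a. a \<in> A \<Longrightarrow> finite (supp (f a))) \<Longrightarrow> coprod (sum f A) = (\<Sum>a\<in>A. coprod (f a))"
  by (simp add: coprod_def linext_sum)

lemma coprod_mul:
  assumes "finite (supp F)" "finite (supp G)"
  shows "coprod (mul F G) = mul_tensor (coprod F) (coprod G)"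
  unfolding coprod_def
  by (rule linext_mul[OF assms])
    (rule coprod_word_append, rule mul_tensor_sum_left, rule mul_tensor_sum_right,
      rule mul_tensor_scale_left, rule mul_tensor_scale_right)

lemma coprod_S: "coprod (S m) = (\<Sum>c\<le>m. tensor (S c) (S (m - c)))"
proof (cases "m = 0")
  case True
  then show ?thesis
    by (simp add: S_eq_basis coprod_word_def lists_below_Nil list_minus_def SB_eq_basis_filter)
next
  case False
  have "lists_below [m] = (\<lambda>c. [c]) ` {..m}"
    unfolding lists_below_Cons lists_below_Nil by auto
  moreover have "inj_on (\<lambda>c. [c]) {..m}" by (rule inj_onI) auto
  ultimately have "coprod_word [m] = (\<Sum>c\<le>m. tensor (SB [c]) (SB [m - c]))"
    unfolding coprod_word_def by (simp add: sum.reindex list_minus_def)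
  moreover have "coprod (S m) = coprod_word [m]"
    using False by (simp add: S_eq_basis)
  ultimately show ?thesis
    by (simp add: S_def)
qed

lemma solve_alternating:
  fixes f :: "nat \<Rightarrow> 'x \<Rightarrow> rat"
  assumes "(\<Sum>j\<le>k. scale ((-1) ^ j) (f j)) = 0"
  shows "f k = (\<Sum>j<k. scale (- ((-1) ^ k * (-1) ^ j)) (f j))"
proof (rule ext)
  fix x
  have "(\<Sum>j\<le>k. (-1) ^ j * f j x) = 0"
    using fun_cong[OF assms, of x] by (simp add: sum_fun_apply)
  then have "(-1) ^ k * f k x = - (\<Sum>j<k. (-1) ^ j * f j x)"
    by (simp add: lessThan_Suc_atMost[symmetric] add.commute eq_neg_iff_add_eq_0)
  then have "(-1) ^ k * ((-1) ^ k * f k x) = (-1) ^ k * (- (\<Sum>j<k. (-1) ^ j * f j x))"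
    by simp
  then show "f k x = (\<Sum>j<k. scale (- ((-1) ^ k * (-1) ^ j)) (f j)) x"
    by (simp add: sum_fun_apply sum_distrib_left sum_negf algebra_simps flip: power_add)
qed

lemma sum_reindex_split:
  fixes g :: "nat \<Rightarrow> nat \<Rightarrow> nat \<Rightarrow> nat \<Rightarrow> 'a::comm_monoid_add"
  shows "(\<Sum>j\<le>k. \<Sum>a\<le>j. \<Sum>c\<le>k - j. g a (j - a) c (k - j - c))
       = (\<Sum>p\<le>k. \<Sum>a\<le>p. \<Sum>b\<le>k - p. g a b (p - a) (k - p - b))"
proof -
  have triple: "(\<Sum>j\<le>k. \<Sum>a\<le>j. \<Sum>c\<le>k - j. h j a c) = (\<Sum>(j, a, c)\<in>(SIGMA j:{..k}. SIGMA a:{..j}. {..k - j}). h j a c)"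
    for h :: "nat \<Rightarrow> nat \<Rightarrow> nat \<Rightarrow> 'a"
    by (simp add: sum.Sigma split_def)
  show ?thesis
    unfolding triple
    by (rule sum.reindex_bij_witness[where i = "\<lambda>(p, a, b). (a + b, a, p - a)" and j = "\<lambda>(j, a, c). (a + c, a, j - a)"])
      (auto simp: add.commute)
qed

definition Lambda_coprod :: "nat \<Rightarrow> nsym2" where
  "Lambda_coprod j = (\<Sum>a\<le>j. tensor (Lambda a) (Lambda (j - a)))"

lemma mul_tensor_Lambda_coprod_S:
  "mul_tensor (Lambda_coprod j) (coprod (S c)) =
    (\<Sum>a\<le>j. \<Sum>c'\<le>c. tensor (mul (Lambda a) (S c')) (mul (Lambda (j - a)) (S (c - c'))))"
  unfolding Lambda_coprod_def coprod_S mul_tensor_sum_sum by (simp add: mul_tensor_tensor)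

lemma mul_tensor_Lambda_coprod_S_0: "mul_tensor (Lambda_coprod k) (coprod (S 0)) = Lambda_coprod k"
  unfolding mul_tensor_Lambda_coprod_S by (simp add: Lambda_coprod_def S_0)

lemma alt_coprod_Lambda_S_eq_0:
  assumes "0 < k"
  shows "(\<Sum>j\<le>k. scale ((-1) ^ j) (mul_tensor (Lambda_coprod j) (coprod (S (k - j))))) = 0"
proof -
  define g where "g a b c d = scale ((-1) ^ (a + b)) (tensor (mul (Lambda a) (S c)) (mul (Lambda b) (S d)))"
    for a b c d
  have "(\<Sum>j\<le>k. scale ((-1) ^ j) (mul_tensor (Lambda_coprod j) (coprod (S (k - j)))))
      = (\<Sum>j\<le>k. \<Sum>a\<le>j. \<Sum>c\<le>k - j. g a (j - a) c (k - j - c))"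
    unfolding mul_tensor_Lambda_coprod_S scale_sum g_def by (intro sum.cong refl) simp
  also have "\<dots> = (\<Sum>p\<le>k. \<Sum>a\<le>p. \<Sum>b\<le>k - p. g a b (p - a) (k - p - b))"
    by (rule sum_reindex_split)
  also have "\<dots> = (\<Sum>p\<le>k. tensor (alt_Lambda_S p) (alt_Lambda_S (k - p)))"
    unfolding alt_Lambda_S_def tensor_sum_sum g_def
    by (intro sum.cong refl) (simp add: tensor_scale_left tensor_scale_right power_add mult.commute)
  also have "\<dots> = 0"
  proof (rule sum.neutral, intro ballI)
    fix p assume "p \<in> {..k}"
    then have "alt_Lambda_S p = 0 \<or> alt_Lambda_S (k - p) = 0"
      using assms by (cases "p = 0") (simp_all add: alt_Lambda_S_eq_0)
    then show "tensor (alt_Lambda_S p) (alt_Lambda_S (k - p)) = 0"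
      by (auto simp: tensor_def fun_eq_iff)
  qed
  finally show ?thesis .
qed

text \<open>Both \<open>\<Lambda>\<^sub>k\<close> and \<open>\<Sum>a\<le>k. \<Lambda>\<^sub>a \<otimes> \<Lambda>\<^sub>k\<^sub>-\<^sub>a\<close> are determined recursively by the identity
  \<open>\<Sum>j\<le>k. (-1)\<^sup>j \<Lambda>\<^sub>j S\<^sub>k\<^sub>-\<^sub>j = 0\<close> and its image under \<open>\<Delta>\<close>.\<close>

lemma coprod_Lambda: "coprod (Lambda k) = Lambda_coprod k"
proof (induct k rule: less_induct)
  case (less k)
  show ?case
  proof (cases "k = 0")
    case True
    then show ?thesis
      by (simp add: Lambda_0 Lambda_coprod_def coprod_word_def lists_below_Nil list_minus_def SB_eq_basis_filter)
  next
    case False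
    then have k: "0 < k" by simp
    let ?c = "\<lambda>j. - ((-1) ^ k * (-1) ^ j) :: rat"
    have "Lambda k = (\<Sum>j<k. scale (?c j) (mul (Lambda j) (S (k - j))))"
      using solve_alternating[of "\<lambda>j. mul (Lambda j) (S (k - j))" k] alt_Lambda_S_eq_0[OF k]
      by (simp add: alt_Lambda_S_def S_0)
    then have "coprod (Lambda k) = (\<Sum>j<k. coprod (scale (?c j) (mul (Lambda j) (S (k - j)))))"
      by (auto intro!: coprod_sum finite_supp_scale Sym_finite_supp[OF Sym_Lambda_S])
    also have "\<dots> = (\<Sum>j<k. scale (?c j) (coprod (mul (Lambda j) (S (k - j)))))"
      by (auto intro!: sum.cong coprod_scale Sym_finite_supp[OF Sym_Lambda_S])
    also have "\<dots> = (\<Sum>j<k. scale (?c j) (mul_tensor (Lambda_coprod j) (coprod (S (k - j)))))"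
      by (intro sum.cong refl) (simp add: coprod_mul Sym_finite_supp[OF Sym_Lambda] Sym_finite_supp[OF Sym_S] less)
    also have "\<dots> = Lambda_coprod k"
      using solve_alternating[of "\<lambda>j. mul_tensor (Lambda_coprod j) (coprod (S (k - j)))" k]
        alt_coprod_Lambda_S_eq_0[OF k]
      by (simp add: mul_tensor_Lambda_coprod_S_0)
    finally show ?thesis .
  qed
qed

lemma coprod_Stilde: "coprod (Stilde m) = (\<Sum>p\<le>m. tensor (Stilde p) (Stilde (m - p)))"
proof -
  define g where "g a b c d = tensor (mul (Lambda a) (S c)) (mul (Lambda b) (S d))" for a b c d
  have "coprod (Stilde m) = (\<Sum>k\<le>m. coprod (mul (Lambda k) (S (m - k))))"
    unfolding Stilde_def by (rule coprod_sum) (auto intro: Sym_finite_supp Sym_Lambda_S)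
  also have "\<dots> = (\<Sum>k\<le>m. mul_tensor (Lambda_coprod k) (coprod (S (m - k))))"
    by (intro sum.cong refl)
      (simp add: coprod_mul coprod_Lambda Sym_finite_supp[OF Sym_Lambda] Sym_finite_supp[OF Sym_S])
  also have "\<dots> = (\<Sum>k\<le>m. \<Sum>a\<le>k. \<Sum>c\<le>m - k. g a (k - a) c (m - k - c))"
    unfolding mul_tensor_Lambda_coprod_S g_def ..
  also have "\<dots> = (\<Sum>p\<le>m. \<Sum>a\<le>p. \<Sum>b\<le>m - p. g a b (p - a) (m - p - b))"
    by (rule sum_reindex_split)
  also have "\<dots> = (\<Sum>p\<le>m. tensor (Stilde p) (Stilde (m - p)))"
    unfolding Stilde_def tensor_sum_sum g_def ..
  finally show ?thesis .
qed

lemma coprod_theta_word: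
  "coprod (theta_word J) = (\<Sum>r\<in>lists_below J. tensor (theta_word r) (theta_word (list_minus J r)))"
proof (induct J)
  case Nil
  then show ?case by (simp add: coprod_word_def lists_below_Nil list_minus_def SB_eq_basis_filter)
next
  case (Cons j J)
  have inj: "inj_on (\<lambda>(c, r). c # r) ({..j} \<times> lists_below J)" by (rule inj_onI) auto
  have "coprod (theta_word (j # J)) = mul_tensor (coprod (Stilde j)) (coprod (theta_word J))"
    by (simp add: theta_word_Cons coprod_mul Sym_finite_supp[OF Sym_Stilde] finite_supp_theta_word)
  also have "\<dots> = (\<Sum>(c, r)\<in>{..j} \<times> lists_below J. tensor (theta_word (c # r)) (theta_word (list_minus (j # J) (c # r))))"
    unfolding coprod_Stilde Cons mul_tensor_sum_sum sum.cartesian_product[symmetric]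
    by (intro sum.cong refl) (simp add: mul_tensor_tensor theta_word_Cons list_minus_Cons)
  also have "\<dots> = (\<Sum>r\<in>lists_below (j # J). tensor (theta_word r) (theta_word (list_minus (j # J) r)))"
    unfolding lists_below_Cons sum.reindex[OF inj] by (simp add: comp_def case_prod_unfold)
  finally show ?case .
qed


section \<open>The internal product commutes with \<open>\<theta>\<close>\<close>

text \<open>\<open>row_split i I (S\<^sup>A \<otimes> S\<^sup>B)\<close> is \<open>S\<^sup>A (S\<^sup>I * S\<^sup>B)\<close> if \<open>A\<close> can be the first row of a
  matrix with first row sum \<open>i\<close>, and \<open>0\<close> otherwise.\<close>

definition row_split_term :: "nat \<Rightarrow> nat list \<Rightarrow> nat list \<times> nat list \<Rightarrow> nsym" where
  "row_split_term i I p = (if sum_list (fst p) = i then mul (SB (fst p)) (internal_words I (snd p)) else 0)"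

definition row_split :: "nat \<Rightarrow> nat list \<Rightarrow> nsym2 \<Rightarrow> nsym" where
  "row_split i I T = linext (row_split_term i I) T"

lemma row_split_tensor:
  assumes X: "X \<in> Sym a" and Y: "finite (supp Y)"
  shows "row_split i I (tensor X Y) = (if a = i then mul X (internal_word I Y) else 0)"
proof -
  have fX: "finite (supp X)" using Sym_finite_supp[OF X] .
  have "row_split i I (tensor X Y) = (\<Sum>p\<in>supp X \<times> supp Y. scale (tensor X Y p) (row_split_term i I p))"
    unfolding row_split_def by (rule linext_eq) (use fX Y in \<open>auto simp: supp_def\<close>)
  also have "\<dots> = (\<Sum>(A, B)\<in>supp X \<times> supp Y. scale (X A * Y B) (row_split_term i I (A, B)))"
    by (rule sum.cong[OF refl]) auto
  also have "\<dots> = (\<Sum>A\<in>supp X. \<Sum>B\<in>supp Y. if a = i then scale (X A * Y B) (mul (basis A) (internal_words I B)) else 0)"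
    unfolding sum.cartesian_product[symmetric]
  proof (intro sum.cong refl)
    fix A B assume "A \<in> supp X"
    then have "A \<in> comps a" using X by (auto simp: Sym_iff)
    then show "scale (X A * Y B) (row_split_term i I (A, B)) =
        (if a = i then scale (X A * Y B) (mul (basis A) (internal_words I B)) else 0)"
      by (auto simp: row_split_term_def comps_def SB_eq_basis)
  qed
  also have "\<dots> = (if a = i then mul X (internal_word I Y) else 0)"
  proof (cases "a = i")
    case True
    have "mul X (internal_word I Y) = mul (linext basis X) (linext (internal_words I) Y)"
      using linext_basis_eq[OF fX] by (simp add: internal_word_def)
    also have "\<dots> = (\<Sum>A\<in>supp X. \<Sum>B\<in>supp Y. scale (X A * Y B) (mul (basis A) (internal_words I B)))"
      unfolding linext_def mul_sum_left
      by (intro sum.cong refl) (simp add: mul_sum_right mul_scale_left mul_scale_right mult.commute)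
    finally show ?thesis using True by simp
  qed simp
  finally show ?thesis .
qed

lemma row_split_coprod_word: "row_split i I (coprod_word J) = internal_words (i # I) J"
proof -
  have "row_split i I (coprod_word J) = (\<Sum>r\<in>lists_below J. row_split i I (tensor (SB r) (SB (list_minus J r))))"
    unfolding coprod_word_def row_split_def
    by (rule linext_sum) (simp_all add: finite_lists_below finite_supp_tensor Sym_finite_supp[OF Sym_SB])
  also have "\<dots> = (\<Sum>r\<in>lists_below J. if sum_list r = i then mul (SB r) (internal_words I (list_minus J r)) else 0)"
    by (intro sum.cong refl) (simp add: row_split_tensor[OF Sym_SB] internal_word_SB Sym_finite_supp[OF Sym_SB])
  also have "\<dots> = internal_words (i # I) J"
    by (simp add: internal_words_Cons sum.inter_filter finite_lists_below)
  finally show ?thesis .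
qed

lemma internal_word_Cons_coprod:
  assumes "finite (supp G)"
  shows "internal_word (i # I) G = row_split i I (coprod G)"
  unfolding coprod_def row_split_def
  by (subst linext_linext) (simp_all add: assms finite_supp_coprod_word internal_word_def
      row_split_coprod_word[unfolded row_split_def])

lemma internal_word_theta_word: "internal_word I (theta_word J) = theta (internal_words I J)"
proof (induct I arbitrary: J)
  case Nil
  show ?case
  proof (cases "\<forall>l<length J. J ! l = 0")
    case True
    then have "filter (\<lambda>x. x \<noteq> 0) J = []" by (auto simp: filter_empty_conv in_set_conv_nth)
    then have "theta_word J = basis []" using theta_word_filter[of J] by simp
    then show ?thesis using True by (simp add: internal_words_Nil)
  next
    case False
    then obtain l where "l < length J" "J ! l \<noteq> 0" by auto
    then have "0 < sum_list J" using elem_le_sum_list[of l J] by linarith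
    then have "[] \<notin> comps (sum_list J)"
      unfolding comps_def by (metis (mono_tags) less_irrefl mem_Collect_eq sum_list.Nil)
    then have "theta_word J [] = 0"
      using Sym_theta_word[of J] by (auto simp: Sym_iff supp_def)
    moreover have "internal_words [] J = 0"
      unfolding internal_words_Nil using False by (rule if_not_P)
    ultimately show ?thesis
      by (simp only: internal_word_Nil[OF Sym_theta_word] scale_0 theta_zero)
  qed
next
  case (Cons i I)
  let ?T = "\<lambda>r. if sum_list r = i then mul (SB r) (internal_words I (list_minus J r)) else 0"
  have fin: "finite (supp (?T r))" for r
    by (simp add: finite_supp_mul Sym_finite_supp[OF Sym_SB] Sym_finite_supp[OF Sym_internal_words])
  have "internal_word (i # I) (theta_word J)
      = (\<Sum>r\<in>lists_below J. row_split i I (tensor (theta_word r) (theta_word (list_minus J r))))"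
    unfolding internal_word_Cons_coprod[OF finite_supp_theta_word] coprod_theta_word row_split_def
    by (rule linext_sum) (simp_all add: finite_lists_below finite_supp_tensor finite_supp_theta_word)
  also have "\<dots> = (\<Sum>r\<in>lists_below J. theta (?T r))"
    by (intro sum.cong refl)
      (simp add: row_split_tensor[OF Sym_theta_word finite_supp_theta_word] Cons theta_mul theta_SB
        Sym_finite_supp[OF Sym_SB] Sym_finite_supp[OF Sym_internal_words])
  also have "\<dots> = theta (internal_words (i # I) J)"
    by (simp add: theta_eq_linext linext_sum fin finite_lists_below internal_words_Cons sum.inter_filter)
  finally show ?case .
qed

theorem internal_word_theta:
  assumes "finite (supp H)"
  shows "internal_word I (theta H) = theta (internal_word I H)"
  unfolding internal_word_def theta_eq_linext
  using assms finite_supp_theta_word Sym_finite_supp[OF Sym_internal_words]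
  by (simp add: linext_linext internal_word_theta_word[unfolded internal_word_def theta_eq_linext])


lemma internal_theta:
  assumes "finite (supp F)" "finite (supp H)"
  shows "internal F (theta H) = theta (internal F H)"
proof -
  have "internal F (theta H) = linext (\<lambda>I. theta (internal_word I H)) F"
    using assms by (simp add: internal_eq_linext internal_word_theta)
  also have "\<dots> = theta (internal F H)"
    unfolding internal_eq_linext theta_eq_linext
    using assms Sym_finite_supp[OF Sym_internal_word] by (simp add: linext_linext)
  finally show ?thesis .
qed

lemma internal_S_right:
  assumes "F \<in> Sym n"
  shows "internal F (S n) = F"
proof -
  have "internal F (S n) = linext basis F"
    unfolding internal_eq_linext S_def
    using assms by (intro linext_cong) (auto simp: internal_word_SB internal_words_single SB_eq_basis Sym_iff comps_def)
  then show ?thesis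
    using linext_basis_eq[OF Sym_finite_supp[OF assms]] by simp
qed

lemma theta_eq_internal_Stilde:
  assumes "F \<in> Sym n"
  shows "theta F = internal F (Stilde n)"
proof -
  have "Stilde n = theta (S n)"
    by (simp add: S_def theta_SB theta_word_Cons)
  then show ?thesis
    using internal_theta[OF Sym_finite_supp[OF assms] Sym_finite_supp[OF Sym_S]] internal_S_right[OF assms]
    by simp
qed

lemma internal_in_Sym:
  assumes F: "F \<in> Sym n" and G: "finite (supp G)"
  shows "internal F G \<in> Sym n"
  unfolding internal_eq_linext
  using Sym_finite_supp[OF F] Sym_internal_word[OF G] F
  by (intro Sym_linext) (auto simp: Sym_iff comps_def)

lemma internal_Peak:
  assumes F: "F \<in> Sym n" and G: "G \<in> Peak n"
  shows "internal F G \<in> Peak n"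
proof -
  obtain H where H: "H \<in> Sym n" "G = theta H"
    using G Peak_eq_theta_image by auto
  then have "internal F G = theta (internal F H)"
    using internal_theta Sym_finite_supp F by blast
  then show ?thesis
    using theta_in_Peak[OF internal_in_Sym[OF F Sym_finite_supp[OF H(1)]]] by simp
qed

theorem mainTheorem2:
  fixes n :: nat
  shows "(\<forall>F\<in>Sym n. \<forall>G\<in>Peak n. internal F G \<in> Peak n) \<and>
         (\<forall>F\<in>Sym n. theta F = internal F (Stilde n)) \<and>
         Peak n = (\<lambda>F. internal F (Stilde n)) ` Sym n"
proof (intro conjI ballI)
  fix F G assume "F \<in> Sym n" "G \<in> Peak n"
  then show "internal F G \<in> Peak n" by (rule internal_Peak)
next
  fix F assume "F \<in> Sym n"
  then show "theta F = internal F (Stilde n)" by (rule theta_eq_internal_Stilde)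
next
  have "(\<lambda>F. internal F (Stilde n)) ` Sym n = theta ` Sym n"
    by (rule image_cong[OF refl]) (simp add: theta_eq_internal_Stilde)
  then show "Peak n = (\<lambda>F. internal F (Stilde n)) ` Sym n"
    by (simp add: Peak_eq_theta_image)
qed

end
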